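(* Let $\Psi$ be a set and let $A$ be a left noetherian associative unital ring endowed with a smooth action of $\mathfrak S_\Psi$ by ring automorphisms. Then every smooth finitely generated left $A\langle\mathfrak S_\Psi\rangle$-module $W$ is noetherian when considered as a left $A\langle U\rangle$-module, for every open subgroup $U\subseteq\mathfrak S_\Psi$.
   Context: $\mathfrak S_\Psi$ is the group of all permutations of $\Psi$, with the topology whose base of open neighbourhoods of the identity consists of the pointwise stabilizers $\mathfrak S_{\Psi|T}$ of finite subsets $T\subset\Psi$. For a ring $A$ with an action of a group $G$ by ring automorphisms ($a\mapsto a^g$), $A\langle G\rangle$ is the skew group ring: the free left $A$-module on $G$ with multiplication $(a[g])(b[h])=ab^g[gh]$. An action (on a ring or on a module) is smooth if the stabilizer of every element is open. A module is finitely generated if it is generated by finitely many elements. *)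

theory Defs
  imports "HOL-Combinatorics.Permutations"
begin

definition Sym :: "'p set \<Rightarrow> ('p \<Rightarrow> 'p) set" where
  "Sym \<Psi> = {\<sigma>. \<sigma> permutes \<Psi>}"

definition pstab :: "'p set \<Rightarrow> 'p set \<Rightarrow> ('p \<Rightarrow> 'p) set" where
  "pstab \<Psi> T = {\<sigma> \<in> Sym \<Psi>. \<forall>t\<in>T. \<sigma> t = t}"

definition perm_open :: "'p set \<Rightarrow> ('p \<Rightarrow> 'p) set \<Rightarrow> bool" where
  "perm_open \<Psi> U \<longleftrightarrow> U \<subseteq> Sym \<Psi> \<and>
     (\<forall>g\<in>U. \<exists>T. finite T \<and> T \<subseteq> \<Psi> \<and> (\<lambda>h. g \<circ> h) ` pstab \<Psi> T \<subseteq> U)"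

definition perm_subgroup :: "'p set \<Rightarrow> ('p \<Rightarrow> 'p) set \<Rightarrow> bool" where
  "perm_subgroup \<Psi> U \<longleftrightarrow> U \<subseteq> Sym \<Psi> \<and> id \<in> U \<and>
     (\<forall>g\<in>U. \<forall>h\<in>U. g \<circ> h \<in> U) \<and> (\<forall>g\<in>U. inv g \<in> U)"

definition open_subgroup :: "'p set \<Rightarrow> ('p \<Rightarrow> 'p) set \<Rightarrow> bool" where
  "open_subgroup \<Psi> U \<longleftrightarrow> perm_subgroup \<Psi> U \<and> perm_open \<Psi> U"

definition left_ideal :: "'a::{ring,monoid_mult} set \<Rightarrow> bool" where
  "left_ideal I \<longleftrightarrow> 0 \<in> I \<and> (\<forall>x\<in>I. \<forall>y\<in>I. x + y \<in> I) \<and> (\<forall>x\<in>I. - x \<in> I)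
     \<and> (\<forall>a. \<forall>x\<in>I. a * x \<in> I)"

definition left_noetherian :: "'a::{ring,monoid_mult} itself \<Rightarrow> bool" where
  "left_noetherian _ \<longleftrightarrow> (\<forall>I::'a set. left_ideal I \<longrightarrow>
     (\<exists>F. finite F \<and> F \<subseteq> I \<and> I = {\<Sum>f\<in>F. c f * f | c. True}))"

definition ring_aut_action :: "'p set \<Rightarrow> (('p \<Rightarrow> 'p) \<Rightarrow> 'a::{ring,monoid_mult} \<Rightarrow> 'a) \<Rightarrow> bool" where
  "ring_aut_action \<Psi> act \<longleftrightarrow>
     (\<forall>g\<in>Sym \<Psi>. bij (act g) \<and> act g 1 = 1 \<and>
        (\<forall>a b. act g (a + b) = act g a + act g b) \<and> (\<forall>a b. act g (a * b) = act g a * act g b)) \<and>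
     (\<forall>a. act id a = a) \<and>
     (\<forall>g\<in>Sym \<Psi>. \<forall>h\<in>Sym \<Psi>. \<forall>a. act (g \<circ> h) a = act g (act h a))"

definition smooth_ring_action :: "'p set \<Rightarrow> (('p \<Rightarrow> 'p) \<Rightarrow> 'a \<Rightarrow> 'a) \<Rightarrow> bool" where
  "smooth_ring_action \<Psi> act \<longleftrightarrow> (\<forall>a. perm_open \<Psi> {g \<in> Sym \<Psi>. act g a = a})"

text \<open>Elements: finitely supported functions G -> A; x corresponds to sum of x g [g].\<close>
definition skew_carrier :: "('p \<Rightarrow> 'p) set \<Rightarrow> (('p \<Rightarrow> 'p) \<Rightarrow> 'a::zero) set" where
  "skew_carrier G = {x. finite {g. x g \<noteq> 0} \<and> (\<forall>g. x g \<noteq> 0 \<longrightarrow> g \<in> G)}"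

definition skew_add :: "(('p \<Rightarrow> 'p) \<Rightarrow> 'a::plus) \<Rightarrow> (('p \<Rightarrow> 'p) \<Rightarrow> 'a) \<Rightarrow> ('p \<Rightarrow> 'p) \<Rightarrow> 'a" where
  "skew_add x y = (\<lambda>k. x k + y k)"

text \<open>(a[g])(b[h]) = a (act g b) [g o h].\<close>
definition skew_mult :: "(('p \<Rightarrow> 'p) \<Rightarrow> 'a::{ring,monoid_mult} \<Rightarrow> 'a) \<Rightarrow>
    (('p \<Rightarrow> 'p) \<Rightarrow> 'a) \<Rightarrow> (('p \<Rightarrow> 'p) \<Rightarrow> 'a) \<Rightarrow> ('p \<Rightarrow> 'p) \<Rightarrow> 'a" where
  "skew_mult act x y = (\<lambda>k. \<Sum>g\<in>{g. x g \<noteq> 0}. \<Sum>h\<in>{h. y h \<noteq> 0}.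
       if g \<circ> h = k then x g * act g (y h) else 0)"

definition skew_delta :: "('p \<Rightarrow> 'p) \<Rightarrow> 'a::zero \<Rightarrow> ('p \<Rightarrow> 'p) \<Rightarrow> 'a" where
  "skew_delta g a = (\<lambda>k. if k = g then a else 0)"

definition skew_one :: "('p \<Rightarrow> 'p) \<Rightarrow> 'a::{zero,one}" where
  "skew_one = skew_delta id 1"

definition skew_module :: "('p \<Rightarrow> 'p) set \<Rightarrow> (('p \<Rightarrow> 'p) \<Rightarrow> 'a::{ring,monoid_mult} \<Rightarrow> 'a) \<Rightarrow>
    ((('p \<Rightarrow> 'p) \<Rightarrow> 'a) \<Rightarrow> 'w::ab_group_add \<Rightarrow> 'w) \<Rightarrow> bool" where
  "skew_module G act smult \<longleftrightarrow>
     (\<forall>x\<in>skew_carrier G. \<forall>y\<in>skew_carrier G. \<forall>w. smult (skew_add x y) w = smult x w + smult y w) \<and>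
     (\<forall>x\<in>skew_carrier G. \<forall>v w. smult x (v + w) = smult x v + smult x w) \<and>
     (\<forall>x\<in>skew_carrier G. \<forall>y\<in>skew_carrier G. \<forall>w. smult (skew_mult act x y) w = smult x (smult y w)) \<and>
     (\<forall>w. smult skew_one w = w)"

definition smooth_module :: "'p set \<Rightarrow> ((('p \<Rightarrow> 'p) \<Rightarrow> 'a::{ring,monoid_mult}) \<Rightarrow> 'w \<Rightarrow> 'w) \<Rightarrow> bool" where
  "smooth_module \<Psi> smult \<longleftrightarrow>
     (\<forall>w. perm_open \<Psi> {g \<in> Sym \<Psi>. smult (skew_delta g 1) w = w})"

definition mspan :: "'r set \<Rightarrow> ('r \<Rightarrow> 'w \<Rightarrow> 'w::ab_group_add) \<Rightarrow> 'w set \<Rightarrow> 'w set" where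
  "mspan C smult F = {\<Sum>f\<in>F. smult (c f) f | c. \<forall>f\<in>F. c f \<in> C}"

definition fin_gen_module :: "'r set \<Rightarrow> ('r \<Rightarrow> 'w \<Rightarrow> 'w::ab_group_add) \<Rightarrow> bool" where
  "fin_gen_module C smult \<longleftrightarrow> (\<exists>F. finite F \<and> UNIV = mspan C smult F)"

definition submodule :: "'r set \<Rightarrow> ('r \<Rightarrow> 'w \<Rightarrow> 'w::ab_group_add) \<Rightarrow> 'w set \<Rightarrow> bool" where
  "submodule C smult N \<longleftrightarrow> 0 \<in> N \<and> (\<forall>v\<in>N. \<forall>w\<in>N. v + w \<in> N) \<and> (\<forall>x\<in>C. \<forall>w\<in>N. smult x w \<in> N)"

definition noetherian_module :: "'r set \<Rightarrow> ('r \<Rightarrow> 'w \<Rightarrow> 'w::ab_group_add) \<Rightarrow> bool" where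
  "noetherian_module C smult \<longleftrightarrow> (\<forall>N. submodule C smult N \<longrightarrow>
     (\<exists>F. finite F \<and> F \<subseteq> N \<and> N = mspan C smult F))"

end

theory Submission
  imports Defs Complex_Main "HOL-Library.List_Lexorder" "HOL-Library.Countable_Set"
begin

text \<open>
  Choose generators \<open>w\<^sub>1, \<dots>, w\<^sub>n\<close> of \<open>W\<close> and a finite tuple \<open>t\<close> of points such that every
  permutation fixing \<open>t\<close> pointwise fixes each \<open>w\<^sub>c\<close>. Then \<open>a[g] w\<^sub>c\<close> only depends on \<open>a\<close>, \<open>c\<close> and
  the injective tuple \<open>g \<circ> t\<close>, so \<open>W\<close> is a quotient of the \<open>A\<close>-module of finitely supported
  coefficient functions on such monomials \<open>(c, g \<circ> t)\<close>.

  Let \<open>U\<close> contain the pointwise stabilizer of the finite set \<open>S\<close>. A strictly ascending chain of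
  \<open>A\<langle>U\<rangle>\<close>-submodules of \<open>W\<close> pulls back to a chain of coefficient modules supported on a
  countable set \<open>C \<supseteq> S\<close> and stable under the permutations of \<open>C\<close> fixing \<open>S\<close>. Enumerating \<open>C\<close>
  orders the monomials lexicographically, and comparing leading coefficients gives at every step
  \<open>k\<close> a monomial \<open>m\<^sub>k\<close> whose leading ideal grows. A Higman-type argument on tuples of natural
  numbers extracts a subsequence in which each \<open>m\<^sub>k\<close> is carried to the next one by a permutation
  fixing \<open>S\<close> and preserving the order on any prescribed finite set. Transporting the finitely
  generated leading ideals along these permutations gives a strictly ascending chain of left
  ideals of \<open>A\<close> up to automorphisms, which is impossible since \<open>A\<close> is left noetherian.
\<close>

section \<open>Subsequences of sequences of natural numbers\<close>

lemma strict_mono_subseq_const: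
  fixes s :: "nat \<Rightarrow> 'a"
  assumes "finite F" "\<And>k. s k \<in> F"
  obtains \<psi> :: "nat \<Rightarrow> nat" and v where "strict_mono \<psi>" "\<And>k. s (\<psi> k) = v"
proof -
  have "range s \<subseteq> F" using assms(2) by blast
  then have "finite (range s)" using assms(1) finite_subset by blast
  then obtain a where "infinite {k \<in> UNIV. s k = s a}"
    using pigeonhole_infinite[of "UNIV :: nat set" s] by blast
  from infinite_enumerate[OF this] obtain r :: "nat \<Rightarrow> nat"
    where "strict_mono r" "\<And>n. r n \<in> {k \<in> UNIV. s k = s a}" by blast
  then show ?thesis using that by simp
qed

lemma strict_mono_subseq_mono:
  fixes s :: "nat \<Rightarrow> nat"
  obtains \<psi> :: "nat \<Rightarrow> nat" where "strict_mono \<psi>" "mono (s \<circ> \<psi>)"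
proof -
  obtain f :: "nat \<Rightarrow> nat" where f: "strict_mono f" "monoseq (s \<circ> f)"
    using seq_monosub by (auto simp: comp_def)
  show ?thesis
  proof (cases "mono (s \<circ> f)")
    case True
    then show ?thesis using f(1) that by blast
  next
    case False
    then have "antimono (s \<circ> f)" using f(2) unfolding monoseq_def mono_def antimono_def by blast
    then have "\<And>k. (s \<circ> f) k \<in> {..(s \<circ> f) 0}" by (simp add: antimono_def)
    then obtain \<psi> :: "nat \<Rightarrow> nat" and v where "strict_mono \<psi>" "\<And>k. (s \<circ> f) (\<psi> k) = v"
      using strict_mono_subseq_const[of "{..(s \<circ> f) 0}"] by blast
    moreover have "strict_mono (f \<circ> \<psi>)" using f(1) \<open>strict_mono \<psi>\<close> by (simp add: strict_mono_def)
    ultimately show ?thesis using that[of "f \<circ> \<psi>"] by (simp add: mono_def)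
  qed
qed

lemma strict_mono_subseq_mono_finite:
  fixes s :: "nat \<Rightarrow> 'i \<Rightarrow> nat"
  assumes "finite I"
  obtains \<psi> :: "nat \<Rightarrow> nat" where "strict_mono \<psi>" "\<And>i. i \<in> I \<Longrightarrow> mono (\<lambda>k. s (\<psi> k) i)"
  using assms
proof (induction I arbitrary: thesis rule: finite_induct)
  case empty
  show ?case using empty(1)[of id] by (simp add: strict_mono_def)
next
  case (insert i I)
  obtain \<psi> :: "nat \<Rightarrow> nat" where \<psi>: "strict_mono \<psi>" "\<And>j. j \<in> I \<Longrightarrow> mono (\<lambda>k. s (\<psi> k) j)"
    using insert.IH by blast
  obtain \<phi> :: "nat \<Rightarrow> nat" where \<phi>: "strict_mono \<phi>" "mono ((\<lambda>k. s (\<psi> k) i) \<circ> \<phi>)"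
    using strict_mono_subseq_mono by blast
  have "strict_mono (\<psi> \<circ> \<phi>)" using \<psi>(1) \<phi>(1) by (simp add: strict_mono_def)
  moreover have "mono (\<lambda>k. s ((\<psi> \<circ> \<phi>) k) j)" if "j \<in> insert i I" for j
  proof (cases "j = i")
    case True
    then show ?thesis using \<phi>(2) by (simp add: comp_def)
  next
    case False
    then have "mono (\<lambda>k. s (\<psi> k) j)" using \<psi>(2) that by blast
    then show ?thesis using strict_mono_mono[OF \<phi>(1)] by (auto simp: mono_def)
  qed
  ultimately show ?case using insert.prems by blast
qed

text \<open>The witness is \<open>x \<mapsto> x + M x\<close>, where \<open>M x\<close> is the largest shift \<open>u'!i - u!i\<close> over the
  entries \<open>u!i \<le> x\<close>.\<close>

lemma ex_strict_mono_map_eq: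
  fixes u u' :: "nat list"
  assumes len: "length u' = length u"
    and pat: "\<And>i j. i < length u \<Longrightarrow> j < length u \<Longrightarrow> u!i < u!j \<longleftrightarrow> u'!i < u'!j"
    and le: "\<And>i. i < length u \<Longrightarrow> u!i \<le> u'!i"
    and gap: "\<And>i j. i < length u \<Longrightarrow> j < length u \<Longrightarrow> u!j - u!i \<le> u'!j - u'!i"
  obtains h where "strict_mono h" "map h u = u'"
proof -
  define M where "M x = Max (insert 0 {u'!i - u!i | i. i < length u \<and> u!i \<le> x})" for x
  define h where "h x = x + M x" for x
  have fin: "finite {u'!i - u!i | i. i < length u \<and> u!i \<le> x}" for x
  proof -
    have "{u'!i - u!i | i. i < length u \<and> u!i \<le> x} \<subseteq> (\<lambda>i. u'!i - u!i) ` {..<length u}" by blast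
    then show ?thesis using finite_subset by blast
  qed
  have M_mono: "M x \<le> M y" if "x \<le> y" for x y
    unfolding M_def using fin that by (intro Max_mono) auto
  have "strict_mono h"
  proof (rule strict_monoI)
    fix x y :: nat assume "x < y"
    then show "h x < h y" unfolding h_def using M_mono[of x y] by linarith
  qed
  moreover have "h (u!j) = u'!j" if j: "j < length u" for j
  proof -
    have shift_le: "u'!i - u!i \<le> u'!j - u!j" if i: "i < length u" "u!i \<le> u!j" for i
    proof (cases "u!i < u!j")
      case True
      then show ?thesis using pat[OF i(1) j] gap[OF i(1) j] le[OF i(1)] le[OF j] by simp
    next
      case False
      then have "u'!i = u'!j" using i pat[OF i(1) j] pat[OF j i(1)] by simp
      then show ?thesis using False i(2) by simp
    qed
    have "M (u!j) = u'!j - u!j"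
      unfolding M_def
    proof (rule antisym)
      show "Max (insert 0 {u'!i - u!i | i. i < length u \<and> u!i \<le> u!j}) \<le> u'!j - u!j"
        using fin shift_le by (subst Max_le_iff) auto
      show "u'!j - u!j \<le> Max (insert 0 {u'!i - u!i | i. i < length u \<and> u!i \<le> u!j})"
        using fin j by (intro Max_ge) auto
    qed
    then show ?thesis unfolding h_def using le[OF j] by simp
  qed
  then have "map h u = u'" using len by (intro nth_equalityI) auto
  ultimately show ?thesis using that by blast
qed

text \<open>Pass to a subsequence on which the tag and the order pattern are constant and every entry
  and every gap between two entries is non-decreasing; then \<open>ex_strict_mono_map_eq\<close> applies.\<close>

lemma nat_lists_strict_mono_chain:
  fixes us :: "nat \<Rightarrow> nat list" and tag :: "nat \<Rightarrow> 'b"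
  assumes len: "\<And>k. length (us k) = L" and "finite Tg" and "\<And>k. tag k \<in> Tg"
  obtains \<psi> :: "nat \<Rightarrow> nat" where "strict_mono \<psi>" "\<And>j. tag (\<psi> j) = tag (\<psi> 0)"
    "\<And>j. \<exists>h. strict_mono h \<and> map h (us (\<psi> j)) = us (\<psi> (Suc j))"
proof -
  define pat where "pat u = {(i,j). i < L \<and> j < L \<and> (u::nat list)!i < u!j}" for u
  have "(tag k, pat (us k)) \<in> Tg \<times> Pow ({..<L} \<times> {..<L})" for k
    using assms(3) unfolding pat_def by auto
  then obtain \<psi>1 :: "nat \<Rightarrow> nat" and v where p1: "strict_mono \<psi>1" "\<And>k. (tag (\<psi>1 k), pat (us (\<psi>1 k))) = v"
    using strict_mono_subseq_const[of "Tg \<times> Pow ({..<L} \<times> {..<L})" "\<lambda>k. (tag k, pat (us k))"] assms(2)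
    by blast
  define s where "s k idx = (case idx of Inl i \<Rightarrow> us (\<psi>1 k) ! i
      | Inr (i,j) \<Rightarrow> us (\<psi>1 k) ! j - us (\<psi>1 k) ! i)" for k idx
  obtain \<psi>2 :: "nat \<Rightarrow> nat" where p2: "strict_mono \<psi>2"
    "\<And>idx. idx \<in> Inl ` {..<L} \<union> Inr ` ({..<L} \<times> {..<L}) \<Longrightarrow> mono (\<lambda>k. s (\<psi>2 k) idx)"
    using strict_mono_subseq_mono_finite[of "Inl ` {..<L} \<union> Inr ` ({..<L} \<times> {..<L})" s] by blast
  define \<psi> where "\<psi> = \<psi>1 \<circ> \<psi>2"
  have "strict_mono \<psi>" unfolding \<psi>_def using p1(1) p2(1) by (simp add: strict_mono_def)
  moreover have "tag (\<psi> j) = tag (\<psi> 0)" for j unfolding \<psi>_def using p1(2) by (metis comp_apply fst_conv)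
  moreover have "\<exists>h. strict_mono h \<and> map h (us (\<psi> j)) = us (\<psi> (Suc j))" for j
  proof -
    define u u' where "u = us (\<psi> j)" and "u' = us (\<psi> (Suc j))"
    have lu: "length u = L" "length u' = L" unfolding u_def u'_def using len by simp_all
    have "pat u = pat u'" unfolding u_def u'_def \<psi>_def using p1(2) by (metis comp_apply snd_conv)
    then have pattern: "u!a < u!b \<longleftrightarrow> u'!a < u'!b" if "a < L" "b < L" for a b
      using that unfolding pat_def by (auto simp: set_eq_iff)
    have grow: "s (\<psi>2 j) idx \<le> s (\<psi>2 (Suc j)) idx"
      if "idx \<in> Inl ` {..<L} \<union> Inr ` ({..<L} \<times> {..<L})" for idx
      using p2(2)[OF that] by (simp add: mono_def)
    have entry: "u!a \<le> u'!a" if "a < L" for a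
      using grow[of "Inl a"] that unfolding s_def u_def u'_def \<psi>_def by simp
    have gap: "u!b - u!a \<le> u'!b - u'!a" if "a < L" "b < L" for a b
      using grow[of "Inr (a, b)"] that unfolding s_def u_def u'_def \<psi>_def by simp
    obtain h where "strict_mono h" "map h u = u'"
    proof (rule ex_strict_mono_map_eq[of u' u])
      show "length u' = length u" using lu by simp
      show "u!a < u!b \<longleftrightarrow> u'!a < u'!b" if "a < length u" "b < length u" for a b
        using pattern that lu by simp
      show "u!a \<le> u'!a" if "a < length u" for a using entry that lu by simp
      show "u!b - u!a \<le> u'!b - u'!a" if "a < length u" "b < length u" for a b
        using gap that lu by simp
    qed (rule that)
    then show ?thesis unfolding u_def u'_def by blast
  qed
  ultimately show ?thesis using that by blast
qed

section \<open>Monomials and their transport by permutations\<close>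

definition supp :: "('m \<Rightarrow> 'a::zero) \<Rightarrow> 'm set" where
  "supp x = {m. x m \<noteq> 0}"

text \<open>A monomial \<open>(c, f)\<close> with \<open>f\<close> an injective \<open>d\<close>-tuple stands for \<open>[g] w\<^sub>c\<close>, where \<open>w\<^sub>c\<close> is the
  \<open>c\<close>-th generator and \<open>g\<close> is any permutation sending a fixed \<open>d\<close>-tuple to \<open>f\<close>.\<close>

definition monomials :: "nat \<Rightarrow> nat \<Rightarrow> 'p set \<Rightarrow> (nat \<times> 'p list) set" where
  "monomials n d C = {(c, f). c < n \<and> length f = d \<and> distinct f \<and> set f \<subseteq> C}"

definition mon_map :: "('p \<Rightarrow> 'p) \<Rightarrow> nat \<times> 'p list \<Rightarrow> nat \<times> 'p list" where
  "mon_map g m = (fst m, map g (snd m))"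

definition supported_pstab :: "'p set \<Rightarrow> 'p set \<Rightarrow> 'p set \<Rightarrow> ('p \<Rightarrow> 'p) set" where
  "supported_pstab \<Psi> S C = {g. g permutes \<Psi> \<and> (\<forall>s\<in>S. g s = s) \<and> (\<forall>p. p \<notin> C \<longrightarrow> g p = p)}"

lemma monomialsD:
  assumes "m \<in> monomials n d C"
  shows "fst m < n" "length (snd m) = d" "distinct (snd m)" "set (snd m) \<subseteq> C"
  using assms unfolding monomials_def by auto

lemma finite_monomials: "finite C \<Longrightarrow> finite (monomials n d C)"
proof -
  assume "finite C"
  then have "finite ({..<n} \<times> {f. set f \<subseteq> C \<and> length f = d})"
    using finite_lists_length_eq by blast
  moreover have "monomials n d C \<subseteq> {..<n} \<times> {f. set f \<subseteq> C \<and> length f = d}"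
    unfolding monomials_def by auto
  ultimately show ?thesis using finite_subset by blast
qed

lemma supported_pstab_Sym: "g \<in> supported_pstab \<Psi> S C \<Longrightarrow> g \<in> Sym \<Psi>"
  unfolding supported_pstab_def Sym_def by blast

lemma supported_pstab_pstab: "supported_pstab \<Psi> S C \<subseteq> pstab \<Psi> S"
  unfolding supported_pstab_def pstab_def Sym_def by blast

lemma supported_pstab_closed:
  assumes "g \<in> supported_pstab \<Psi> S C" "p \<in> C"
  shows "g p \<in> C"
proof (rule ccontr)
  have g: "g permutes \<Psi>" "\<And>q. q \<notin> C \<Longrightarrow> g q = q" using assms(1) unfolding supported_pstab_def by simp_all
  assume "g p \<notin> C"
  then have "g (g p) = g p" by (rule g(2))
  then have "g p = p" using permutes_inj[OF g(1)] by (simp add: inj_eq)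
  then show False using assms(2) \<open>g p \<notin> C\<close> by simp
qed

lemma inj_on_extends_to_permutes:
  assumes "finite K" "inj_on h K"
  obtains p where "p permutes (K \<union> h ` K)" "\<And>x. x \<in> K \<Longrightarrow> p x = h x"
proof -
  define F where "F = K \<union> h ` K"
  have fF: "finite F" using assms unfolding F_def by blast
  have sub1: "K \<subseteq> F" and sub2: "h ` K \<subseteq> F" unfolding F_def by blast+
  have "card (h ` K) = card K" using assms(2) by (rule card_image)
  then have "card (F - K) = card (F - h ` K)"
    using card_Diff_subset[OF assms(1) sub1] card_Diff_subset[OF finite_imageI[OF assms(1)] sub2] by simp
  then obtain b where b: "bij_betw b (F - K) (F - h ` K)"
    using fF finite_same_card_bij by (metis finite_Diff)
  define p where "p = (\<lambda>x. if x \<in> K then h x else if x \<in> F then b x else x)"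
  have "bij_betw p K (h ` K)"
    using assms(2) bij_betw_cong[of K p h] by (simp add: p_def bij_betw_imageI)
  moreover have "bij_betw p (F - K) (F - h ` K)"
    using b bij_betw_cong[of "F - K" p b] by (simp add: p_def)
  ultimately have "bij_betw p (K \<union> (F - K)) (h ` K \<union> (F - h ` K))"
    by (rule bij_betw_combine) blast
  moreover have "K \<union> (F - K) = F" "h ` K \<union> (F - h ` K) = F" using sub1 sub2 by blast+
  moreover have "{x. p x \<noteq> x} \<subseteq> F" unfolding p_def using sub1 by auto
  ultimately have "p permutes F" unfolding permutes_altdef by simp
  then show ?thesis using that unfolding F_def p_def by simp
qed

lemma to_nat_on_lift_permutes:
  assumes "countable C" "infinite C" "finite K" "K \<subseteq> C" "inj_on h (to_nat_on C ` K)"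
  obtains g where "g permutes C" "\<And>p. p \<in> K \<Longrightarrow> to_nat_on C (g p) = h (to_nat_on C p)"
proof -
  define \<nu> \<mu> where "\<nu> = to_nat_on C" and "\<mu> = from_nat_into C"
  have \<nu>: "bij_betw \<nu> C UNIV" unfolding \<nu>_def using to_nat_on_infinite assms(1,2) .
  have \<mu>: "bij_betw \<mu> UNIV C" unfolding \<mu>_def using bij_betw_from_nat_into assms(1,2) .
  have \<nu>_\<mu>: "\<nu> (\<mu> k) = k" for k unfolding \<mu>_def \<nu>_def using assms(1,2) by simp
  obtain \<pi> where \<pi>: "\<pi> permutes (\<nu> ` K \<union> h ` \<nu> ` K)" "\<And>k. k \<in> \<nu> ` K \<Longrightarrow> \<pi> k = h k"
    using inj_on_extends_to_permutes[of "\<nu> ` K" h] assms(3,5) unfolding \<nu>_def by blast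
  have "bij_betw \<pi> UNIV UNIV" using permutes_bij[OF \<pi>(1)] by (simp add: bij_def bij_betw_def)
  define g where "g p = (if p \<in> C then \<mu> (\<pi> (\<nu> p)) else p)" for p
  have "bij_betw (\<mu> \<circ> \<pi> \<circ> \<nu>) C C"
    using bij_betw_trans[OF bij_betw_trans[OF \<nu> \<open>bij_betw \<pi> UNIV UNIV\<close>] \<mu>] by (simp add: comp_assoc)
  then have "bij_betw g C C" using bij_betw_cong[of C g "\<mu> \<circ> \<pi> \<circ> \<nu>"] by (simp add: g_def)
  then have "g permutes C" unfolding permutes_altdef by (auto simp: g_def)
  moreover have "\<nu> (g p) = h (\<nu> p)" if "p \<in> K" for p
    using that assms(4) \<pi>(2) \<nu>_\<mu> unfolding g_def by auto
  ultimately show ?thesis using that unfolding \<nu>_def by blast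
qed

lemma strict_mono_lift_supported_pstab:
  assumes C: "countable C" "infinite C" "S \<subseteq> C" "C \<subseteq> \<Psi>" and sl: "set sl = S"
    and D: "finite D" "D \<subseteq> C" and f: "set f \<subseteq> C" "set f' \<subseteq> C" "length f' = length f"
    and h: "strict_mono h" "map h (map (to_nat_on C) (f @ sl)) = map (to_nat_on C) (f' @ sl)"
  obtains g where "g \<in> supported_pstab \<Psi> S C" "map g f = f'"
    "\<And>p. p \<in> D \<Longrightarrow> to_nat_on C (g p) = h (to_nat_on C p)"
proof -
  define \<nu> where "\<nu> = to_nat_on C"
  have \<nu>_inj: "p = q" if "\<nu> p = \<nu> q" "p \<in> C" "q \<in> C" for p q
    using that inj_on_to_nat_on[OF C(1)] unfolding \<nu>_def by (meson inj_onD)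
  have hf: "map h (map \<nu> f) = map \<nu> f'" and hS: "map h (map \<nu> sl) = map \<nu> sl"
    using h(2) f(3) unfolding \<nu>_def by auto
  define K where "K = D \<union> set f \<union> S"
  have K: "finite K" "K \<subseteq> C" unfolding K_def using D f(1) C(3) sl by auto
  obtain g where g: "g permutes C" "\<And>p. p \<in> K \<Longrightarrow> \<nu> (g p) = h (\<nu> p)"
    using to_nat_on_lift_permutes[OF C(1,2) K strict_mono_imp_inj_on[OF h(1)]]
    unfolding \<nu>_def by blast
  have gC: "g p \<in> C" if "p \<in> C" for p using g(1) that by (simp add: permutes_in_image)
  have "g s = s" if s: "s \<in> S" for s
  proof (rule \<nu>_inj)
    have "h (\<nu> s) = \<nu> s" using hS s sl by (simp add: map_idI)
    then show "\<nu> (g s) = \<nu> s" using g(2)[of s] s unfolding K_def by simp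
    show "g s \<in> C" "s \<in> C" using s C(3) gC by auto
  qed
  moreover have "g permutes \<Psi>" using permutes_subset[OF g(1) C(4)] .
  moreover have "g p = p" if "p \<notin> C" for p using g(1) that by (simp add: permutes_not_in)
  ultimately have "g \<in> supported_pstab \<Psi> S C" unfolding supported_pstab_def by blast
  moreover have "map g f = f'"
  proof (rule nth_equalityI)
    fix i assume "i < length (map g f)"
    then have i: "i < length f" "i < length f'" using f(3) by simp_all
    then have "f!i \<in> C" "f'!i \<in> C" using f(1,2) nth_mem by blast+
    moreover have "\<nu> (g (f!i)) = \<nu> (f'!i)"
    proof -
      have "\<nu> (g (f!i)) = h (\<nu> (f!i))" using g(2)[of "f!i"] i(1) unfolding K_def by simp
      also have "\<dots> = map h (map \<nu> f) ! i" using i(1) by simp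
      finally show ?thesis using hf i(2) by simp
    qed
    ultimately show "map g f ! i = f' ! i" using \<nu>_inj gC i(1) by simp
  qed (use f in simp)
  ultimately show ?thesis using that g(2) unfolding K_def \<nu>_def by blast
qed

text \<open>The tuples are compared through their enumerations followed by a listing of \<open>S\<close>, so that the
  strictly monotone map relating consecutive ones fixes the points of \<open>S\<close>.\<close>

lemma monomial_seq_transport:
  fixes ms :: "nat \<Rightarrow> nat \<times> 'p list"
  assumes "countable C" "S \<subseteq> C" "finite S" "C \<subseteq> \<Psi>" "\<And>k. ms k \<in> monomials n d C"
  obtains \<psi> :: "nat \<Rightarrow> nat" where "strict_mono \<psi>"
    "\<And>j D. finite D \<Longrightarrow> D \<subseteq> C \<Longrightarrow> \<exists>g h. g \<in> supported_pstab \<Psi> S C \<and> strict_mono h \<and>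
        mon_map g (ms (\<psi> j)) = ms (\<psi> (Suc j)) \<and> (\<forall>p\<in>D. to_nat_on C (g p) = h (to_nat_on C p))"
proof (cases "finite C")
  case True
  obtain \<psi> :: "nat \<Rightarrow> nat" and v where "strict_mono \<psi>" "\<And>k. ms (\<psi> k) = v"
    using strict_mono_subseq_const[of "monomials n d C" ms] finite_monomials[OF True] assms(5) by blast
  moreover have "id \<in> supported_pstab \<Psi> S C" "strict_mono (id :: nat \<Rightarrow> nat)"
    unfolding supported_pstab_def strict_mono_def by simp_all
  ultimately show ?thesis using that[of \<psi>] by (fastforce simp: mon_map_def)
next
  case False
  obtain sl where sl: "set sl = S" using assms(3) finite_list by blast
  define us where "us k = map (to_nat_on C) (snd (ms k) @ sl)" for k
  have "length (us k) = d + length sl" for k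
    using monomialsD(2)[OF assms(5)] unfolding us_def by simp
  moreover have "fst (ms k) \<in> {..<n}" for k using monomialsD(1)[OF assms(5)] by simp
  ultimately obtain \<psi> :: "nat \<Rightarrow> nat" where \<psi>: "strict_mono \<psi>" "\<And>j. fst (ms (\<psi> j)) = fst (ms (\<psi> 0))"
      "\<And>j. \<exists>h. strict_mono h \<and> map h (us (\<psi> j)) = us (\<psi> (Suc j))"
    using nat_lists_strict_mono_chain[of us _ "{..<n}" "\<lambda>k. fst (ms k)"] by blast
  have transport: "\<exists>g h. g \<in> supported_pstab \<Psi> S C \<and> strict_mono h \<and>
      mon_map g (ms (\<psi> j)) = ms (\<psi> (Suc j)) \<and> (\<forall>p\<in>D. to_nat_on C (g p) = h (to_nat_on C p))"
    if D: "finite D" "D \<subseteq> C" for j D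
  proof -
    obtain h where h: "strict_mono h" "map h (us (\<psi> j)) = us (\<psi> (Suc j))" using \<psi>(3) by blast
    have f: "set (snd (ms (\<psi> j))) \<subseteq> C" "set (snd (ms (\<psi> (Suc j)))) \<subseteq> C"
      "length (snd (ms (\<psi> (Suc j)))) = length (snd (ms (\<psi> j)))"
      using monomialsD(2,4)[OF assms(5)] by auto
    obtain g where g: "g \<in> supported_pstab \<Psi> S C" "map g (snd (ms (\<psi> j))) = snd (ms (\<psi> (Suc j)))"
      "\<And>p. p \<in> D \<Longrightarrow> to_nat_on C (g p) = h (to_nat_on C p)"
      by (rule strict_mono_lift_supported_pstab[OF assms(1) False assms(2,4) sl D f h(1) h(2)[unfolded us_def]])
        (rule that)
    then have "mon_map g (ms (\<psi> j)) = ms (\<psi> (Suc j))"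
      unfolding mon_map_def using \<psi>(2) by (metis prod.collapse)
    then show ?thesis using g(1,3) h(1) by blast
  qed
  show ?thesis by (rule that[OF \<psi>(1) transport])
qed

section \<open>Automorphisms and left ideals\<close>

locale ring_aut =
  fixes \<Psi> :: "'p set" and act :: "('p \<Rightarrow> 'p) \<Rightarrow> 'a::{ring,monoid_mult} \<Rightarrow> 'a"
  assumes ring_aut_action: "ring_aut_action \<Psi> act"
begin

lemma act_add: "g \<in> Sym \<Psi> \<Longrightarrow> act g (a + b) = act g a + act g b"
  and act_mult: "g \<in> Sym \<Psi> \<Longrightarrow> act g (a * b) = act g a * act g b"
  and act_one: "g \<in> Sym \<Psi> \<Longrightarrow> act g 1 = 1"
  and act_bij: "g \<in> Sym \<Psi> \<Longrightarrow> bij (act g)"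
  and act_id: "act id a = a"
  and act_comp: "g \<in> Sym \<Psi> \<Longrightarrow> h \<in> Sym \<Psi> \<Longrightarrow> act (g \<circ> h) a = act g (act h a)"
  using ring_aut_action unfolding ring_aut_action_def by blast+

lemma act_zero: "g \<in> Sym \<Psi> \<Longrightarrow> act g 0 = 0"
  using act_add[of g 0 0] by simp

lemma act_uminus: "g \<in> Sym \<Psi> \<Longrightarrow> act g (- a) = - act g a"
  using act_add[of g a "- a"] act_zero[of g] by (simp add: eq_neg_iff_add_eq_0 add.commute)

lemma act_eq_0_iff: "g \<in> Sym \<Psi> \<Longrightarrow> act g a = 0 \<longleftrightarrow> a = 0"
  using act_zero[of g] bij_is_inj[OF act_bij] by (metis injD)

lemma act_sum: "g \<in> Sym \<Psi> \<Longrightarrow> act g (\<Sum>x\<in>F. f x) = (\<Sum>x\<in>F. act g (f x))"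
  using sum_comp_morphism[of "act g" f F] act_zero act_add by (simp add: comp_def)

end

lemma id_Sym: "id \<in> Sym \<Psi>"
  unfolding Sym_def by simp

lemma comp_Sym: "g \<in> Sym \<Psi> \<Longrightarrow> h \<in> Sym \<Psi> \<Longrightarrow> g \<circ> h \<in> Sym \<Psi>"
  unfolding Sym_def by (simp add: permutes_compose)

lemma left_ideal_sum:
  assumes "left_ideal I" "\<And>f. f \<in> F \<Longrightarrow> e f \<in> I"
  shows "(\<Sum>f\<in>F. c f * e f) \<in> I"
proof (cases "finite F")
  case True
  then show ?thesis using assms(2)
  proof (induction F rule: finite_induct)
    case empty
    then show ?case using assms(1) unfolding left_ideal_def by simp
  next
    case (insert x F)
    then have "c x * e x \<in> I" "(\<Sum>f\<in>F. c f * e f) \<in> I" using assms(1) unfolding left_ideal_def by auto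
    then show ?case using insert(1,2) assms(1) unfolding left_ideal_def by simp
  qed
next
  case False
  then show ?thesis using assms(1) unfolding left_ideal_def by simp
qed

lemma left_ideal_UN_chain:
  assumes ideal: "\<And>j. left_ideal (P j)" and mono: "\<And>j. P j \<subseteq> P (Suc j)"
  shows "left_ideal (\<Union>j. P j)"
  unfolding left_ideal_def
proof (intro conjI ballI allI)
  show "0 \<in> (\<Union>j. P j)" using ideal[of 0] unfolding left_ideal_def by blast
next
  fix x y assume "x \<in> (\<Union>j. P j)" "y \<in> (\<Union>j. P j)"
  then obtain i j where "x \<in> P i" "y \<in> P j" by blast
  then have "x \<in> P (max i j)" "y \<in> P (max i j)"
    using lift_Suc_mono_le[of P, OF mono] by (meson max.cobounded1 max.cobounded2 subsetD)+
  then show "x + y \<in> (\<Union>j. P j)" using ideal[of "max i j"] unfolding left_ideal_def by blast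
next
  fix x assume "x \<in> (\<Union>j. P j)"
  then obtain i where "x \<in> P i" by blast
  then show "- x \<in> (\<Union>j. P j)" using ideal[of i] unfolding left_ideal_def by blast
next
  fix a x assume "x \<in> (\<Union>j. P j)"
  then obtain i where "x \<in> P i" by blast
  then show "a * x \<in> (\<Union>j. P j)" using ideal[of i] unfolding left_ideal_def by blast
qed

lemma left_noetherian_no_strict_chain:
  fixes P :: "nat \<Rightarrow> 'a::{ring,monoid_mult} set"
  assumes noeth: "left_noetherian TYPE('a)" and ideal: "\<And>j. left_ideal (P j)"
    and mono: "\<And>j. P j \<subseteq> P (Suc j)" and strict: "\<And>j. \<exists>a\<in>P (Suc j). a \<notin> P j"
  shows False
proof -
  have "\<exists>F. finite F \<and> F \<subseteq> (\<Union>j. P j) \<and> (\<Union>j. P j) = {\<Sum>f\<in>F. c f * f | c. True}"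
    using noeth[unfolded left_noetherian_def, rule_format, OF left_ideal_UN_chain[where P = P, OF ideal mono]] .
  then obtain F where F: "finite F" "F \<subseteq> (\<Union>j. P j)" "(\<Union>j. P j) = {\<Sum>f\<in>F. c f * f | c. True}"
    by (elim exE conjE)
  have "\<forall>f\<in>F. \<exists>j. f \<in> P j" using F(2) by blast
  from bchoice[OF this] obtain ix where ix: "\<And>f. f \<in> F \<Longrightarrow> f \<in> P (ix f)" by blast
  define J where "J = Max (insert 0 (ix ` F))"
  have "f \<in> P J" if "f \<in> F" for f
    using ix[OF that] lift_Suc_mono_le[of P, OF mono, of "ix f" J] F(1) that unfolding J_def by auto
  then have "(\<Union>j. P j) \<subseteq> P J" using F(3) left_ideal_sum[OF ideal[of J], of F id] by auto
  moreover obtain a where "a \<in> P (Suc J)" "a \<notin> P J" using strict by blast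
  ultimately show False by blast
qed

context ring_aut
begin

text \<open>Pulling \<open>J j\<close> back along \<open>g (j - 1) \<circ> \<dots> \<circ> g 0\<close> gives an ordinary strictly ascending chain.\<close>

lemma left_noetherian_no_twisted_chain:
  fixes J :: "nat \<Rightarrow> 'a set"
  assumes noeth: "left_noetherian TYPE('a)" and g: "\<And>j. g j \<in> Sym \<Psi>"
    and ideal: "\<And>j. left_ideal (J j)" and twisted_mono: "\<And>j. act (g j) ` J j \<subseteq> J (Suc j)"
    and strict: "\<And>j. \<exists>a\<in>J (Suc j). a \<notin> act (g j) ` J j"
  shows False
proof -
  define \<gamma> where "\<gamma> = rec_nat id (\<lambda>j r. g j \<circ> r)"
  have \<gamma>_Suc: "\<gamma> (Suc j) = g j \<circ> \<gamma> j" for j by (simp add: \<gamma>_def)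
  have \<gamma>: "\<gamma> j \<in> Sym \<Psi>" for j
  proof (induction j)
    case 0
    show ?case using id_Sym by (simp add: \<gamma>_def id_def)
  next
    case (Suc j)
    then show ?case unfolding \<gamma>_Suc by (rule comp_Sym[OF g])
  qed
  have act_\<gamma>_Suc: "act (\<gamma> (Suc j)) a = act (g j) (act (\<gamma> j) a)" for j a
    unfolding \<gamma>_Suc using act_comp[OF g \<gamma>] .
  define P where "P j = {a. act (\<gamma> j) a \<in> J j}" for j
  have "left_ideal (P j)" for j
    using ideal[of j] act_zero[OF \<gamma>] act_add[OF \<gamma>] act_uminus[OF \<gamma>] act_mult[OF \<gamma>]
    unfolding left_ideal_def P_def by simp
  moreover have "P j \<subseteq> P (Suc j)" for j
    using twisted_mono[of j] act_\<gamma>_Suc unfolding P_def by auto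
  moreover have "\<exists>a\<in>P (Suc j). a \<notin> P j" for j
  proof -
    obtain b where b: "b \<in> J (Suc j)" "b \<notin> act (g j) ` J j" using strict by blast
    obtain a where a: "act (\<gamma> (Suc j)) a = b" using act_bij[OF \<gamma>] by (metis bij_pointE)
    have "a \<in> P (Suc j)" using a b(1) unfolding P_def by simp
    moreover have "a \<notin> P j" using a b(2) act_\<gamma>_Suc unfolding P_def by auto
    ultimately show ?thesis by blast
  qed
  ultimately show False using left_noetherian_no_strict_chain[OF noeth] by blast
qed

end

section \<open>Finitely supported coefficient functions on monomials\<close>

definition coeff_space :: "nat \<Rightarrow> nat \<Rightarrow> 'p set \<Rightarrow> (nat \<times> 'p list \<Rightarrow> 'a::zero) set" where
  "coeff_space n d C = {x. finite (supp x) \<and> supp x \<subseteq> monomials n d C}"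

definition coeff_act :: "(('p \<Rightarrow> 'p) \<Rightarrow> 'a \<Rightarrow> 'a) \<Rightarrow> ('p \<Rightarrow> 'p) \<Rightarrow>
    (nat \<times> 'p list \<Rightarrow> 'a) \<Rightarrow> nat \<times> 'p list \<Rightarrow> 'a" where
  "coeff_act act g x = (\<lambda>m. act g (x (mon_map (inv g) m)))"

definition stable_submodule :: "(('p \<Rightarrow> 'p) \<Rightarrow> 'a \<Rightarrow> 'a) \<Rightarrow> 'p set \<Rightarrow> 'p set \<Rightarrow> 'p set \<Rightarrow>
    nat \<Rightarrow> nat \<Rightarrow> (nat \<times> 'p list \<Rightarrow> 'a::{ring,monoid_mult}) set \<Rightarrow> bool" where
  "stable_submodule act \<Psi> S C n d N \<longleftrightarrow> N \<subseteq> coeff_space n d C \<and> (\<lambda>m. 0) \<in> N \<and>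
     (\<forall>x\<in>N. \<forall>y\<in>N. (\<lambda>m. x m + y m) \<in> N) \<and> (\<forall>x\<in>N. (\<lambda>m. - x m) \<in> N) \<and>
     (\<forall>a. \<forall>x\<in>N. (\<lambda>m. a * x m) \<in> N) \<and> (\<forall>g\<in>supported_pstab \<Psi> S C. \<forall>x\<in>N. coeff_act act g x \<in> N)"

lemma stable_submoduleD:
  assumes "stable_submodule act \<Psi> S C n d N"
  shows "N \<subseteq> coeff_space n d C" "(\<lambda>m. 0) \<in> N" "x \<in> N \<Longrightarrow> y \<in> N \<Longrightarrow> (\<lambda>m. x m + y m) \<in> N"
    "x \<in> N \<Longrightarrow> (\<lambda>m. - x m) \<in> N" "x \<in> N \<Longrightarrow> (\<lambda>m. a * x m) \<in> N"
    "g \<in> supported_pstab \<Psi> S C \<Longrightarrow> x \<in> N \<Longrightarrow> coeff_act act g x \<in> N"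
  using assms unfolding stable_submodule_def by blast+

lemma mon_map_inv:
  assumes "g \<in> Sym \<Psi>"
  shows "mon_map (inv g) (mon_map g m) = m" "mon_map g (mon_map (inv g) m) = m"
proof -
  have p: "g permutes \<Psi>" using assms unfolding Sym_def by blast
  have "map (inv g) (map g xs) = xs" "map g (map (inv g) xs) = xs" for xs
    using permutes_inverses[OF p] by (simp_all add: map_idI)
  then show "mon_map (inv g) (mon_map g m) = m" "mon_map g (mon_map (inv g) m) = m"
    unfolding mon_map_def by simp_all
qed

lemma coeff_act_mon_map: "g \<in> Sym \<Psi> \<Longrightarrow> coeff_act act g x (mon_map g m) = act g (x m)"
  unfolding coeff_act_def using mon_map_inv(1) by metis

lemma (in ring_aut) supp_coeff_act:
  assumes "g \<in> Sym \<Psi>"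
  shows "supp (coeff_act act g x) = mon_map g ` supp x"
proof
  show "supp (coeff_act act g x) \<subseteq> mon_map g ` supp x"
  proof
    fix m assume "m \<in> supp (coeff_act act g x)"
    then have "mon_map (inv g) m \<in> supp x"
      unfolding supp_def coeff_act_def using act_zero[OF assms] by auto
    then show "m \<in> mon_map g ` supp x" using mon_map_inv(2)[OF assms] by (metis image_eqI)
  qed
  show "mon_map g ` supp x \<subseteq> supp (coeff_act act g x)"
  proof
    fix m assume "m \<in> mon_map g ` supp x"
    then obtain m0 where "m0 \<in> supp x" "m = mon_map g m0" by blast
    then show "m \<in> supp (coeff_act act g x)"
      using coeff_act_mon_map[OF assms, of act x m0] act_eq_0_iff[OF assms] unfolding supp_def by simp
  qed
qed

lemma coeff_space_add:
  fixes x y :: "nat \<times> 'p list \<Rightarrow> 'a::monoid_add"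
  assumes "x \<in> coeff_space n d C" "y \<in> coeff_space n d C"
  shows "(\<lambda>m. x m + y m) \<in> coeff_space n d C"
proof -
  have "supp (\<lambda>m. x m + y m) \<subseteq> supp x \<union> supp y" unfolding supp_def by auto
  then show ?thesis using assms unfolding coeff_space_def by (auto intro: finite_subset)
qed

lemma coeff_space_uminus:
  "(x :: nat \<times> 'p list \<Rightarrow> 'a::group_add) \<in> coeff_space n d C \<Longrightarrow> (\<lambda>m. - x m) \<in> coeff_space n d C"
  unfolding coeff_space_def supp_def by simp

lemma coeff_space_mult:
  fixes x :: "nat \<times> 'p list \<Rightarrow> 'a::mult_zero"
  assumes "x \<in> coeff_space n d C"
  shows "(\<lambda>m. a * x m) \<in> coeff_space n d C"
proof -
  have "supp (\<lambda>m. a * x m) \<subseteq> supp x" unfolding supp_def by auto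
  then show ?thesis using assms unfolding coeff_space_def by (auto intro: finite_subset)
qed

lemma coeff_space_zero: "(\<lambda>m. 0) \<in> coeff_space n d C"
  unfolding coeff_space_def supp_def by simp

lemma coeff_space_mono: "C \<subseteq> C' \<Longrightarrow> coeff_space n d C \<subseteq> coeff_space n d C'"
  unfolding coeff_space_def monomials_def by auto

lemma countable_coeff_space_seq:
  fixes xs :: "nat \<Rightarrow> nat \<times> 'p list \<Rightarrow> 'a::zero"
  assumes "finite S" "S \<subseteq> \<Psi>" "\<And>k. xs k \<in> coeff_space n d \<Psi>"
  obtains C where "countable C" "S \<subseteq> C" "C \<subseteq> \<Psi>" "\<And>k. xs k \<in> coeff_space n d C"
proof -
  define C where "C = S \<union> (\<Union>k. \<Union>m\<in>supp (xs k). set (snd m))"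
  have supp_xs: "finite (supp (xs k))" "supp (xs k) \<subseteq> monomials n d \<Psi>" for k
    using assms(3) unfolding coeff_space_def by blast+
  have "countable C"
    unfolding C_def using assms(1) supp_xs(1) by (intro countable_Un countable_UN) (auto intro: countable_finite)
  moreover have "S \<subseteq> C" unfolding C_def by blast
  moreover have "set (snd m) \<subseteq> \<Psi>" if "m \<in> supp (xs k)" for m k
    using monomialsD(4) supp_xs(2) that by blast
  then have "C \<subseteq> \<Psi>" unfolding C_def using assms(2) by blast
  moreover have "supp (xs k) \<subseteq> monomials n d C" for k
    using supp_xs(2) unfolding C_def monomials_def by fastforce
  then have "xs k \<in> coeff_space n d C" for k
    using supp_xs(1) unfolding coeff_space_def by blast
  ultimately show ?thesis using that by blast
qed

lemma mon_map_monomials: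
  assumes "g \<in> Sym \<Psi>" "m \<in> monomials n d C" "\<And>p. p \<in> C \<Longrightarrow> g p \<in> C"
  shows "mon_map g m \<in> monomials n d C"
proof -
  have "inj g" using assms(1) permutes_inj unfolding Sym_def by blast
  then have "distinct (map g (snd m))" using monomialsD(3)[OF assms(2)] by (simp add: distinct_map inj_on_def)
  then show ?thesis using monomialsD[OF assms(2)] assms(3) unfolding monomials_def mon_map_def by auto
qed

lemma (in ring_aut) coeff_space_coeff_act:
  assumes "g \<in> Sym \<Psi>" "x \<in> coeff_space n d C" "\<And>p. p \<in> C \<Longrightarrow> g p \<in> C"
  shows "coeff_act act g x \<in> coeff_space n d C"
proof -
  have "supp (coeff_act act g x) = mon_map g ` supp x" by (rule supp_coeff_act[OF assms(1)])
  then show ?thesis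
    using assms(2) mon_map_monomials[OF assms(1) _ assms(3)] unfolding coeff_space_def by auto
qed

section \<open>Leading coefficient ideals\<close>

definition mon_key :: "('p \<Rightarrow> nat) \<Rightarrow> nat \<times> 'p list \<Rightarrow> nat list" where
  "mon_key \<nu> m = fst m # map \<nu> (snd m)"

definition keys_le :: "('p \<Rightarrow> nat) \<Rightarrow> (nat \<times> 'p list \<Rightarrow> 'a::zero) \<Rightarrow> nat \<times> 'p list \<Rightarrow> bool" where
  "keys_le \<nu> x m \<longleftrightarrow> (\<forall>m'\<in>supp x. mon_key \<nu> m' \<le> mon_key \<nu> m)"

definition lead_ideal :: "('p \<Rightarrow> nat) \<Rightarrow> (nat \<times> 'p list \<Rightarrow> 'a::zero) set \<Rightarrow> nat \<times> 'p list \<Rightarrow> 'a set" where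
  "lead_ideal \<nu> N m = {z m | z. z \<in> N \<and> keys_le \<nu> z m}"

lemma map_strict_mono_less:
  fixes h :: "nat \<Rightarrow> nat"
  assumes "strict_mono h"
  shows "map h xs < map h ys \<longleftrightarrow> xs < ys"
proof (induction xs arbitrary: ys)
  case Nil
  then show ?case by (cases ys) simp_all
next
  case (Cons a xs)
  then show ?case
    using strict_mono_less[OF assms] strict_mono_eq[OF assms] by (cases ys) simp_all
qed

lemma mon_key_transfer:
  fixes h :: "nat \<Rightarrow> nat"
  assumes "strict_mono h" "\<forall>p\<in>D. \<nu> (g p) = h (\<nu> p)" "set (snd m1) \<subseteq> D" "set (snd m2) \<subseteq> D"
  shows "mon_key \<nu> (mon_map g m1) \<le> mon_key \<nu> (mon_map g m2) \<longleftrightarrow> mon_key \<nu> m1 \<le> mon_key \<nu> m2"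
proof -
  have key: "mon_key \<nu> (mon_map g m) = fst m # map h (map \<nu> (snd m))" if "set (snd m) \<subseteq> D" for m
    using assms(2) that unfolding mon_key_def mon_map_def by auto
  have "map h (map \<nu> (snd m1)) < map h (map \<nu> (snd m2)) \<longleftrightarrow> map \<nu> (snd m1) < map \<nu> (snd m2)"
    by (rule map_strict_mono_less[OF assms(1)])
  moreover have "map h (map \<nu> (snd m1)) = map h (map \<nu> (snd m2)) \<longleftrightarrow> map \<nu> (snd m1) = map \<nu> (snd m2)"
    using assms(1) strict_mono_imp_inj_on inj_map_eq_map by blast
  ultimately show ?thesis
    unfolding key[OF assms(3)] key[OF assms(4)] unfolding mon_key_def list_le_def by auto
qed

lemma mon_key_inj:
  assumes "countable C" "m1 \<in> monomials n d C" "m2 \<in> monomials n d C"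
    "mon_key (to_nat_on C) m1 = mon_key (to_nat_on C) m2"
  shows "m1 = m2"
proof -
  have "inj_on (to_nat_on C) (set (snd m1) \<union> set (snd m2))"
    by (rule inj_on_subset[OF inj_on_to_nat_on[OF assms(1)]])
      (use monomialsD(4)[OF assms(2)] monomialsD(4)[OF assms(3)] in blast)
  then show ?thesis using assms(4) unfolding mon_key_def by (simp add: inj_on_map_eq_map prod_eq_iff)
qed

lemma length_mon_key: "m \<in> monomials n d C \<Longrightarrow> length (mon_key \<nu> m) = Suc d"
  unfolding monomials_def mon_key_def by auto

lemma wf_less_fixed_length: "wf {(xs, ys::nat list). length xs = L \<and> length ys = L \<and> xs < ys}"
proof -
  have "{(xs, ys::nat list). length xs = L \<and> length ys = L \<and> xs < ys} \<subseteq> lex {(u, v). u < v}"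
    by (auto simp: lexord_lex list_less_def)
  moreover have "wf (lex {(u, v::nat). u < v})" using wf_less by (rule wf_lex)
  ultimately show ?thesis using wf_subset by blast
qed

lemma lead_ideal_mono: "N \<subseteq> N' \<Longrightarrow> lead_ideal \<nu> N m \<subseteq> lead_ideal \<nu> N' m"
  unfolding lead_ideal_def by blast

lemma keys_le_supp_subset:
  "supp y \<subseteq> supp x \<union> supp x' \<Longrightarrow> keys_le \<nu> x m \<Longrightarrow> keys_le \<nu> x' m \<Longrightarrow> keys_le \<nu> y m"
  unfolding keys_le_def by blast

lemma lead_ideal_left_ideal:
  fixes N :: "(nat \<times> 'p list \<Rightarrow> 'a::{ring,monoid_mult}) set"
  assumes "stable_submodule act \<Psi> S C n d N"
  shows "left_ideal (lead_ideal \<nu> N m)"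
  unfolding left_ideal_def
proof (intro conjI ballI allI)
  have "(\<lambda>m. 0) \<in> N" using stable_submoduleD(2)[OF assms] .
  moreover have "keys_le \<nu> (\<lambda>m. 0 :: 'a) m" unfolding keys_le_def supp_def by simp
  ultimately show "0 \<in> lead_ideal \<nu> N m" unfolding lead_ideal_def by force
next
  fix x y assume "x \<in> lead_ideal \<nu> N m" "y \<in> lead_ideal \<nu> N m"
  then obtain zx zy where z: "zx \<in> N" "keys_le \<nu> zx m" "zx m = x" "zy \<in> N" "keys_le \<nu> zy m" "zy m = y"
    unfolding lead_ideal_def by blast
  have "(\<lambda>m. zx m + zy m) \<in> N" using stable_submoduleD(3)[OF assms z(1,4)] .
  moreover have "keys_le \<nu> (\<lambda>m. zx m + zy m) m"
    by (rule keys_le_supp_subset[OF _ z(2,5)]) (auto simp: supp_def)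
  ultimately show "x + y \<in> lead_ideal \<nu> N m" unfolding lead_ideal_def using z(3,6) by force
next
  fix x assume "x \<in> lead_ideal \<nu> N m"
  then obtain z where z: "z \<in> N" "keys_le \<nu> z m" "z m = x" unfolding lead_ideal_def by blast
  have "(\<lambda>m. - z m) \<in> N" using stable_submoduleD(4)[OF assms z(1)] .
  moreover have "keys_le \<nu> (\<lambda>m. - z m) m"
    by (rule keys_le_supp_subset[OF _ z(2,2)]) (auto simp: supp_def)
  ultimately show "- x \<in> lead_ideal \<nu> N m" unfolding lead_ideal_def using z(3) by force
next
  fix a x assume "x \<in> lead_ideal \<nu> N m"
  then obtain z where z: "z \<in> N" "keys_le \<nu> z m" "z m = x" unfolding lead_ideal_def by blast
  have "(\<lambda>m. a * z m) \<in> N" using stable_submoduleD(5)[OF assms z(1)] .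
  moreover have "keys_le \<nu> (\<lambda>m. a * z m) m"
    by (rule keys_le_supp_subset[OF _ z(2,2)]) (auto simp: supp_def)
  ultimately show "a * x \<in> lead_ideal \<nu> N m" unfolding lead_ideal_def using z(3) by force
qed

context ring_aut
begin

lemma lead_ideal_transfer:
  assumes N: "stable_submodule act \<Psi> S C n d N" and g: "g \<in> supported_pstab \<Psi> S C"
    and h: "strict_mono h" "\<forall>p\<in>D. \<nu> (g p) = h (\<nu> p)"
    and z: "z \<in> N" "keys_le \<nu> z m" and D: "set (snd m) \<subseteq> D" "\<forall>m'\<in>supp z. set (snd m') \<subseteq> D"
  shows "act g (z m) \<in> lead_ideal \<nu> N (mon_map g m)"
proof -
  have g_Sym: "g \<in> Sym \<Psi>" using supported_pstab_Sym[OF g] .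
  have "coeff_act act g z \<in> N" using stable_submoduleD(6)[OF N g z(1)] .
  moreover have "keys_le \<nu> (coeff_act act g z) (mon_map g m)"
    unfolding keys_le_def supp_coeff_act[OF g_Sym]
  proof
    fix m'' assume "m'' \<in> mon_map g ` supp z"
    then obtain m' where m': "m' \<in> supp z" "m'' = mon_map g m'" by blast
    have "mon_key \<nu> m' \<le> mon_key \<nu> m" using z(2) m'(1) unfolding keys_le_def by blast
    then show "mon_key \<nu> m'' \<le> mon_key \<nu> (mon_map g m)"
      using mon_key_transfer[OF h D(2)[rule_format, OF m'(1)] D(1)] m'(2) by simp
  qed
  ultimately have "coeff_act act g z (mon_map g m) \<in> lead_ideal \<nu> N (mon_map g m)"
    unfolding lead_ideal_def by blast
  then show ?thesis using coeff_act_mon_map[OF g_Sym, of act z m] by simp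
qed

end

lemma exists_top_monomial:
  assumes "finite (supp x)" "supp x \<noteq> {}"
  obtains m where "m \<in> supp x" "keys_le \<nu> x m"
proof -
  have "Max (mon_key \<nu> ` supp x) \<in> mon_key \<nu> ` supp x" using assms by simp
  then obtain m where "m \<in> supp x" "mon_key \<nu> m = Max (mon_key \<nu> ` supp x)" by auto
  moreover have "keys_le \<nu> x m" unfolding keys_le_def using calculation(2) assms(1) by simp
  ultimately show ?thesis using that by blast
qed

text \<open>Cancelling the top term of \<open>y\<close> against an element of \<open>N\<close> with the same leading coefficient.\<close>

lemma lead_ideal_reduce:
  assumes C: "countable C" and N: "stable_submodule act \<Psi> S C n d N"
    and N': "stable_submodule act \<Psi> S C n d N'" and "N \<subseteq> N'"
    and y: "y \<in> N'" "y \<notin> N" and m: "m \<in> supp y" "keys_le (to_nat_on C) y m"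
    and lead: "y m \<in> lead_ideal (to_nat_on C) N m"
  obtains y' where "y' \<in> N'" "y' \<notin> N" "\<And>m'. m' \<in> supp y' \<Longrightarrow> mon_key (to_nat_on C) m' < mon_key (to_nat_on C) m"
proof -
  define \<nu> where "\<nu> = to_nat_on C"
  obtain z where z: "z \<in> N" "keys_le \<nu> z m" "y m = z m"
    using lead unfolding lead_ideal_def \<nu>_def by blast
  define y' where "y' = (\<lambda>m. y m + - z m)"
  have "(\<lambda>m. - z m) \<in> N'" using stable_submoduleD(4)[OF N z(1)] \<open>N \<subseteq> N'\<close> by blast
  then have "y' \<in> N'" unfolding y'_def by (rule stable_submoduleD(3)[OF N' y(1)])
  moreover have "y' \<notin> N"
  proof
    assume "y' \<in> N"
    then have "(\<lambda>m'. y' m' + z m') \<in> N" using stable_submoduleD(3)[OF N _ z(1)] by blast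
    moreover have "(\<lambda>m'. y' m' + z m') = y" unfolding y'_def by (simp add: fun_eq_iff)
    ultimately show False using y(2) by simp
  qed
  moreover have "mon_key \<nu> m' < mon_key \<nu> m" if m': "m' \<in> supp y'" for m'
  proof -
    have "m' \<in> supp y \<union> supp z" using m' unfolding y'_def supp_def by auto
    moreover have "supp y \<subseteq> monomials n d C" "supp z \<subseteq> monomials n d C"
      using stable_submoduleD(1)[OF N'] stable_submoduleD(1)[OF N] y(1) z(1)
      unfolding coeff_space_def by blast+
    ultimately have "mon_key \<nu> m' \<le> mon_key \<nu> m" "m' \<in> monomials n d C"
      using m(2) z(2) unfolding keys_le_def \<nu>_def by blast+
    moreover have "m' \<noteq> m" using m' z(3) unfolding supp_def y'_def by auto
    moreover have "m \<in> monomials n d C"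
      using m(1) y(1) stable_submoduleD(1)[OF N'] unfolding coeff_space_def by blast
    ultimately show ?thesis using mon_key_inj[OF C] unfolding \<nu>_def by fastforce
  qed
  ultimately show ?thesis using that unfolding \<nu>_def by blast
qed

text \<open>Induction on the top monomial along the lexicographic order, which is well founded
  because all keys have the same length.\<close>

lemma lead_ideal_strict:
  assumes C: "countable C" and N: "stable_submodule act \<Psi> S C n d N"
    and N': "stable_submodule act \<Psi> S C n d N'" and "N \<subseteq> N'" and y: "y \<in> N'" "y \<notin> N"
  obtains m a where "m \<in> monomials n d C" "a \<in> lead_ideal (to_nat_on C) N' m"
    "a \<notin> lead_ideal (to_nat_on C) N m"
proof -
  define \<nu> where "\<nu> = to_nat_on C"
  have in_monomials: "supp x \<subseteq> monomials n d C" "finite (supp x)" if "x \<in> N'" for x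
    using that stable_submoduleD(1)[OF N'] unfolding coeff_space_def by blast+
  have nonzero: "supp x \<noteq> {}" if "x \<notin> N" for x
  proof
    assume "supp x = {}"
    then have "x = (\<lambda>m. 0)" unfolding supp_def by auto
    then show False using that stable_submoduleD(2)[OF N] by blast
  qed
  have "\<exists>m\<in>monomials n d C. \<exists>a. a \<in> lead_ideal \<nu> N' m \<and> a \<notin> lead_ideal \<nu> N m"
    if "y \<in> N'" "y \<notin> N" "m \<in> supp y" "keys_le \<nu> y m" "mon_key \<nu> m = k" for k y m
    using that
  proof (induction k arbitrary: y m rule: wf_induct[OF wf_less_fixed_length[of "Suc d"]])
    case (1 k)
    have m: "m \<in> monomials n d C" using "1.prems"(1,3) in_monomials by blast
    show ?case
    proof (cases "y m \<in> lead_ideal \<nu> N m")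
      case False
      moreover have "y m \<in> lead_ideal \<nu> N' m" unfolding lead_ideal_def using "1.prems"(1,4) by blast
      ultimately show ?thesis using m by blast
    next
      case True
      obtain y' where y': "y' \<in> N'" "y' \<notin> N" "\<And>m'. m' \<in> supp y' \<Longrightarrow> mon_key \<nu> m' < mon_key \<nu> m"
        using lead_ideal_reduce[OF C N N' \<open>N \<subseteq> N'\<close>, of y m] "1.prems" True unfolding \<nu>_def by blast
      obtain m' where m': "m' \<in> supp y'" "keys_le \<nu> y' m'"
        using exists_top_monomial[of y'] in_monomials(2)[OF y'(1)] nonzero[OF y'(2)] by blast
      have "m' \<in> monomials n d C" using m'(1) in_monomials(1)[OF y'(1)] by blast
      then have "(mon_key \<nu> m', k) \<in> {(xs, ys). length xs = Suc d \<and> length ys = Suc d \<and> xs < ys}"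
        using y'(3)[OF m'(1)] length_mon_key m "1.prems"(5) by fastforce
      then show ?thesis using "1.IH" y'(1,2) m' by blast
    qed
  qed
  moreover obtain m where "m \<in> supp y" "keys_le \<nu> y m"
    using exists_top_monomial[of y] in_monomials(2)[OF y(1)] nonzero[OF y(2)] by blast
  ultimately show ?thesis using that y unfolding \<nu>_def by blast
qed

context ring_aut
begin

text \<open>A leading ideal is generated by finitely many leading coefficients, and these together with
  their witnesses involve only finitely many points.\<close>

lemma lead_ideal_transport:
  assumes noeth: "left_noetherian TYPE('a)" and N: "stable_submodule act \<Psi> S C n d N"
    and m: "m \<in> monomials n d C"
    and transport: "\<And>D. finite D \<Longrightarrow> D \<subseteq> C \<Longrightarrow> \<exists>g h. g \<in> supported_pstab \<Psi> S C \<and> strict_mono h \<and>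
      mon_map g m = m' \<and> (\<forall>p\<in>D. \<nu> (g p) = h (\<nu> p))"
  shows "\<exists>g\<in>Sym \<Psi>. act g ` lead_ideal \<nu> N m \<subseteq> lead_ideal \<nu> N m'"
proof -
  have "\<exists>F. finite F \<and> F \<subseteq> lead_ideal \<nu> N m \<and> lead_ideal \<nu> N m = {\<Sum>f\<in>F. c f * f | c. True}"
    using noeth[unfolded left_noetherian_def, rule_format, OF lead_ideal_left_ideal[OF N]] by simp
  then obtain F where F: "finite F" "F \<subseteq> lead_ideal \<nu> N m" "lead_ideal \<nu> N m = {\<Sum>f\<in>F. c f * f | c. True}"
    by (elim exE conjE)
  have "\<forall>b\<in>F. \<exists>z. z \<in> N \<and> keys_le \<nu> z m \<and> b = z m" using F(2) unfolding lead_ideal_def by blast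
  from bchoice[OF this] obtain z where z: "\<And>b. b \<in> F \<Longrightarrow> z b \<in> N \<and> keys_le \<nu> (z b) m \<and> b = z b m"
    by blast
  define D where "D = set (snd m) \<union> (\<Union>b\<in>F. \<Union>m'\<in>supp (z b). set (snd m'))"
  have z_coeffs: "finite (supp (z b))" "supp (z b) \<subseteq> monomials n d C" if "b \<in> F" for b
    using z[OF that] stable_submoduleD(1)[OF N] unfolding coeff_space_def by blast+
  have "finite D" unfolding D_def using F(1) z_coeffs(1) by auto
  moreover have "D \<subseteq> C"
    unfolding D_def using monomialsD(4)[OF m] z_coeffs(2) monomialsD(4) by blast
  ultimately obtain g h where g: "g \<in> supported_pstab \<Psi> S C" and h: "strict_mono h" "\<forall>p\<in>D. \<nu> (g p) = h (\<nu> p)"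
    and m': "mon_map g m = m'"
    using transport by blast
  have g_Sym: "g \<in> Sym \<Psi>" using supported_pstab_Sym[OF g] .
  have "act g ` lead_ideal \<nu> N m \<subseteq> lead_ideal \<nu> N m'"
  proof
    fix a assume "a \<in> act g ` lead_ideal \<nu> N m"
    then obtain b where b: "b \<in> lead_ideal \<nu> N m" "a = act g b" by blast
    then obtain c where "b = (\<Sum>f\<in>F. c f * f)" using F(3) by blast
    with b(2) have a: "a = (\<Sum>f\<in>F. act g (c f) * act g f)"
      by (simp add: act_sum[OF g_Sym] act_mult[OF g_Sym])
    have "act g b \<in> lead_ideal \<nu> N m'" if "b \<in> F" for b
      using lead_ideal_transfer[OF N g h, of "z b" m] z[OF that] that m' unfolding D_def by auto
    then show "a \<in> lead_ideal \<nu> N m'"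
      unfolding a by (rule left_ideal_sum[OF lead_ideal_left_ideal[OF N]])
  qed
  then show ?thesis using g_Sym by blast
qed

text \<open>Along a subsequence chosen by \<open>monomial_seq_transport\<close>, the leading ideals at which
  consecutive steps of the chain differ form a chain of left ideals of \<open>A\<close> twisted by
  automorphisms, which cannot be strictly ascending.\<close>

lemma no_strict_chain_stable_submodules:
  fixes Ns :: "nat \<Rightarrow> (nat \<times> 'p list \<Rightarrow> 'a) set"
  assumes noeth: "left_noetherian TYPE('a)"
    and C: "countable C" "S \<subseteq> C" "finite S" "C \<subseteq> \<Psi>"
    and Ns: "\<And>k. stable_submodule act \<Psi> S C n d (Ns k)"
    and mono: "\<And>k. Ns k \<subseteq> Ns (Suc k)" and strict: "\<And>k. \<exists>x\<in>Ns (Suc k). x \<notin> Ns k"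
  shows False
proof -
  define \<nu> where "\<nu> = to_nat_on C"
  have "\<forall>k. \<exists>m. m \<in> monomials n d C \<and> (\<exists>a\<in>lead_ideal \<nu> (Ns (Suc k)) m. a \<notin> lead_ideal \<nu> (Ns k) m)"
  proof
    fix k
    obtain x where "x \<in> Ns (Suc k)" "x \<notin> Ns k" using strict by blast
    then obtain m a where "m \<in> monomials n d C" "a \<in> lead_ideal \<nu> (Ns (Suc k)) m"
      "a \<notin> lead_ideal \<nu> (Ns k) m"
      using lead_ideal_strict[OF C(1) Ns Ns mono] unfolding \<nu>_def by blast
    then show "\<exists>m. m \<in> monomials n d C \<and> (\<exists>a\<in>lead_ideal \<nu> (Ns (Suc k)) m. a \<notin> lead_ideal \<nu> (Ns k) m)"
      by blast
  qed
  from choice[OF this] obtain ms where ms: "\<And>k. ms k \<in> monomials n d C"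
    and grows: "\<And>k. \<exists>a\<in>lead_ideal \<nu> (Ns (Suc k)) (ms k). a \<notin> lead_ideal \<nu> (Ns k) (ms k)"
    by blast
  obtain \<psi> :: "nat \<Rightarrow> nat" where \<psi>: "strict_mono \<psi>"
    "\<And>j D. finite D \<Longrightarrow> D \<subseteq> C \<Longrightarrow> \<exists>g h. g \<in> supported_pstab \<Psi> S C \<and> strict_mono h \<and>
        mon_map g (ms (\<psi> j)) = ms (\<psi> (Suc j)) \<and> (\<forall>p\<in>D. \<nu> (g p) = h (\<nu> p))"
    by (rule monomial_seq_transport[where ms = ms, OF C ms, folded \<nu>_def]) (rule that)
  define J where "J j = lead_ideal \<nu> (Ns (Suc (\<psi> j))) (ms (\<psi> j))" for j
  have "\<forall>j. \<exists>g\<in>Sym \<Psi>. act g ` J j \<subseteq> lead_ideal \<nu> (Ns (Suc (\<psi> j))) (ms (\<psi> (Suc j)))"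
    unfolding J_def using lead_ideal_transport[OF noeth Ns ms \<psi>(2)] by blast
  from choice[OF this[unfolded Bex_def]] obtain g where g: "\<And>j. g j \<in> Sym \<Psi>"
    and g_J: "\<And>j. act (g j) ` J j \<subseteq> lead_ideal \<nu> (Ns (Suc (\<psi> j))) (ms (\<psi> (Suc j)))"
    by blast
  have "Suc (\<psi> j) \<le> \<psi> (Suc j)" for j using strict_monoD[OF \<psi>(1), of j "Suc j"] by simp
  then have Ns_le: "Ns (Suc (\<psi> j)) \<subseteq> Ns (\<psi> (Suc j))" for j using lift_Suc_mono_le[of Ns, OF mono] by blast
  have g_J': "act (g j) ` J j \<subseteq> lead_ideal \<nu> (Ns (\<psi> (Suc j))) (ms (\<psi> (Suc j)))" for j
    using g_J[of j] lead_ideal_mono[OF Ns_le[of j]] by (rule order_trans)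
  show False
  proof (rule left_noetherian_no_twisted_chain[where g = g and J = J, OF noeth g])
    show "left_ideal (J j)" for j unfolding J_def by (rule lead_ideal_left_ideal[OF Ns])
    show "act (g j) ` J j \<subseteq> J (Suc j)" for j
      using g_J'[of j] lead_ideal_mono[OF mono[of "\<psi> (Suc j)"]] unfolding J_def by (rule order_trans)
    show "\<exists>a\<in>J (Suc j). a \<notin> act (g j) ` J j" for j
      using grows[of "\<psi> (Suc j)"] g_J'[of j] unfolding J_def by blast
  qed
qed

end

section \<open>Modules over the skew group ring\<close>

lemma skew_delta_carrier: "g \<in> G \<Longrightarrow> skew_delta g a \<in> skew_carrier G"
  unfolding skew_carrier_def skew_delta_def by auto

lemma zero_skew_carrier: "(\<lambda>_. 0) \<in> skew_carrier G"
  unfolding skew_carrier_def by simp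

lemma skew_carrier_mono: "G \<subseteq> G' \<Longrightarrow> skew_carrier G \<subseteq> skew_carrier G'"
  unfolding skew_carrier_def by blast

lemma skew_add_carrier:
  fixes x y :: "('p \<Rightarrow> 'p) \<Rightarrow> 'a::monoid_add"
  assumes "x \<in> skew_carrier G" "y \<in> skew_carrier G"
  shows "skew_add x y \<in> skew_carrier G"
proof -
  have "{g. skew_add x y g \<noteq> 0} \<subseteq> {g. x g \<noteq> 0} \<union> {g. y g \<noteq> 0}" unfolding skew_add_def by auto
  then show ?thesis using assms unfolding skew_carrier_def by (auto intro: finite_subset)
qed

lemma skew_mult_carrier:
  assumes "\<And>g h. g \<in> G \<Longrightarrow> h \<in> G \<Longrightarrow> g \<circ> h \<in> G" "x \<in> skew_carrier G" "y \<in> skew_carrier G"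
  shows "skew_mult act x y \<in> skew_carrier G"
proof -
  have supp: "{k. skew_mult act x y k \<noteq> 0} \<subseteq> (\<lambda>(g, h). g \<circ> h) ` ({g. x g \<noteq> 0} \<times> {h. y h \<noteq> 0})"
  proof
    fix k assume "k \<in> {k. skew_mult act x y k \<noteq> 0}"
    then have "(\<Sum>g\<in>{g. x g \<noteq> 0}. \<Sum>h\<in>{h. y h \<noteq> 0}. if g \<circ> h = k then x g * act g (y h) else 0) \<noteq> 0"
      unfolding skew_mult_def by simp
    then obtain g where g: "g \<in> {g. x g \<noteq> 0}"
        "(\<Sum>h\<in>{h. y h \<noteq> 0}. if g \<circ> h = k then x g * act g (y h) else 0) \<noteq> 0"
      by (rule sum.not_neutral_contains_not_neutral)
    from g(2) obtain h where h: "h \<in> {h. y h \<noteq> 0}" "(if g \<circ> h = k then x g * act g (y h) else 0) \<noteq> 0"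
      by (rule sum.not_neutral_contains_not_neutral)
    then have "g \<circ> h = k" by presburger
    then show "k \<in> (\<lambda>(g, h). g \<circ> h) ` ({g. x g \<noteq> 0} \<times> {h. y h \<noteq> 0})" using g(1) h(1) by force
  qed
  have "finite {g. x g \<noteq> 0}" "finite {h. y h \<noteq> 0}" using assms(2,3) unfolding skew_carrier_def by blast+
  then have "finite {k. skew_mult act x y k \<noteq> 0}" using finite_subset[OF supp] by simp
  moreover have "k \<in> G" if k: "skew_mult act x y k \<noteq> 0" for k
  proof -
    have "k \<in> (\<lambda>(g, h). g \<circ> h) ` ({g. x g \<noteq> 0} \<times> {h. y h \<noteq> 0})" using supp k by blast
    then obtain g h where "x g \<noteq> 0" "y h \<noteq> 0" "k = g \<circ> h" by auto
    then show ?thesis using assms unfolding skew_carrier_def by blast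
  qed
  ultimately show ?thesis unfolding skew_carrier_def by blast
qed

lemma mspanI: "a = (\<Sum>f\<in>F. smult (c f) f) \<Longrightarrow> (\<And>f. f \<in> F \<Longrightarrow> c f \<in> R) \<Longrightarrow> a \<in> mspan R smult F"
  unfolding mspan_def by blast

lemma mspan_subset:
  assumes N: "submodule R smult N" and "F \<subseteq> N"
  shows "mspan R smult F \<subseteq> N"
proof
  fix a assume "a \<in> mspan R smult F"
  then obtain c where c: "a = (\<Sum>f\<in>F. smult (c f) f)" "\<forall>f\<in>F. c f \<in> R" unfolding mspan_def by blast
  have "(\<Sum>f\<in>F'. smult (c f) f) \<in> N" if "F' \<subseteq> F" for F'
  proof (cases "finite F'")
    case True
    then show ?thesis using that
    proof (induction F' rule: finite_induct)
      case empty
      then show ?case using N unfolding submodule_def by simp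
    next
      case (insert f F')
      then have "smult (c f) f \<in> N" using N c(2) \<open>F \<subseteq> N\<close> unfolding submodule_def by blast
      then show ?case using insert N unfolding submodule_def by simp
    qed
  next
    case False
    then show ?thesis using N unfolding submodule_def by simp
  qed
  then show "a \<in> N" unfolding c(1) by blast
qed

lemma not_fin_gen_submodule_chain:
  assumes N: "submodule R smult N" and not_fg: "\<nexists>F. finite F \<and> F \<subseteq> N \<and> N = mspan R smult F"
  obtains F w where "\<And>k. finite (F k)" "\<And>k. w k \<notin> mspan R smult (F k)"
    "\<And>k. F (Suc k) = insert (w k) (F k)"
proof -
  have new: "\<exists>w\<in>N. w \<notin> mspan R smult F" if F: "finite F" "F \<subseteq> N" for F
  proof (rule ccontr)
    assume "\<not> (\<exists>w\<in>N. w \<notin> mspan R smult F)"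
    then have "N = mspan R smult F" using mspan_subset[OF N F(2)] by blast
    then show False using not_fg F by blast
  qed
  have "\<exists>F. \<forall>k. (finite (F k) \<and> F k \<subseteq> N) \<and>
      (\<exists>w. w \<notin> mspan R smult (F k) \<and> F (Suc k) = insert w (F k))"
  proof (rule dependent_nat_choice)
    show "\<exists>F. finite F \<and> F \<subseteq> N" by blast
    fix F k assume "finite F \<and> F \<subseteq> N"
    then obtain w where "w \<in> N" "w \<notin> mspan R smult F" using new by blast
    then show "\<exists>F'. (finite F' \<and> F' \<subseteq> N) \<and> (\<exists>w. w \<notin> mspan R smult F \<and> F' = insert w F)"
      using \<open>finite F \<and> F \<subseteq> N\<close> by blast
  qed
  then obtain F where F: "\<And>k. finite (F k)"
    and step: "\<forall>k. \<exists>w. w \<notin> mspan R smult (F k) \<and> F (Suc k) = insert w (F k)"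
    by blast
  from choice[OF step] show ?thesis using that F by blast
qed

locale skew_mod = ring_aut \<Psi> act
  for \<Psi> :: "'p set" and act :: "('p \<Rightarrow> 'p) \<Rightarrow> 'a::{ring,monoid_mult} \<Rightarrow> 'a" +
  fixes smult :: "(('p \<Rightarrow> 'p) \<Rightarrow> 'a) \<Rightarrow> 'w::ab_group_add \<Rightarrow> 'w"
  assumes skew_module: "skew_module (Sym \<Psi>) act smult"
begin

lemma smult_add: "x \<in> skew_carrier (Sym \<Psi>) \<Longrightarrow> y \<in> skew_carrier (Sym \<Psi>) \<Longrightarrow>
    smult (skew_add x y) w = smult x w + smult y w"
  and smult_add_right: "x \<in> skew_carrier (Sym \<Psi>) \<Longrightarrow> smult x (v + w) = smult x v + smult x w"
  and smult_skew_mult: "x \<in> skew_carrier (Sym \<Psi>) \<Longrightarrow> y \<in> skew_carrier (Sym \<Psi>) \<Longrightarrow>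
    smult (skew_mult act x y) w = smult x (smult y w)"
  and smult_one: "smult skew_one w = w"
  using skew_module unfolding skew_module_def by blast+

lemma smult_zero: "smult (\<lambda>_. 0) w = 0"
proof -
  have zero: "skew_add (\<lambda>_. 0::'a) (\<lambda>_. 0) = (\<lambda>_. 0)" unfolding skew_add_def by simp
  have "smult (\<lambda>_. 0) w = smult (\<lambda>_. 0) w + smult (\<lambda>_. 0) w"
    using smult_add[OF zero_skew_carrier zero_skew_carrier, of w] unfolding zero .
  then show ?thesis by simp
qed

lemma smult_zero_right: "x \<in> skew_carrier (Sym \<Psi>) \<Longrightarrow> smult x 0 = 0"
  using smult_add_right[of x 0 0] by simp

lemma smult_sum_right:
  "x \<in> skew_carrier (Sym \<Psi>) \<Longrightarrow> smult x (\<Sum>i\<in>I. f i) = (\<Sum>i\<in>I. smult x (f i))"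
  using sum_comp_morphism[of "smult x" f I] smult_zero_right smult_add_right by (simp add: comp_def)

lemma skew_delta_zero: "skew_delta g (0::'a) = (\<lambda>_. 0)"
  unfolding skew_delta_def by auto

lemma smult_delta_add:
  assumes "g \<in> Sym \<Psi>"
  shows "smult (skew_delta g (a + b)) w = smult (skew_delta g a) w + smult (skew_delta g b) w"
proof -
  have "skew_add (skew_delta g a) (skew_delta g b) = skew_delta g (a + b)"
    unfolding skew_add_def skew_delta_def by (auto simp: fun_eq_iff)
  then show ?thesis using smult_add[OF skew_delta_carrier[OF assms] skew_delta_carrier[OF assms]] by metis
qed

lemma skew_mult_delta:
  assumes "g \<in> Sym \<Psi>"
  shows "skew_mult act (skew_delta g a) (skew_delta h b) = skew_delta (g \<circ> h) (a * act g b)"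
proof -
  have "{g'. skew_delta g a g' \<noteq> 0} = (if a = 0 then {} else {g})"
    "{h'. skew_delta h b h' \<noteq> 0} = (if b = 0 then {} else {h})"
    unfolding skew_delta_def by auto
  then show ?thesis
    unfolding skew_mult_def by (intro ext) (auto simp: skew_delta_def act_zero[OF assms])
qed

lemma smult_delta_delta:
  assumes "g \<in> Sym \<Psi>" "h \<in> Sym \<Psi>"
  shows "smult (skew_delta g a) (smult (skew_delta h b) w) = smult (skew_delta (g \<circ> h) (a * act g b)) w"
  using smult_skew_mult[OF skew_delta_carrier[OF assms(1)] skew_delta_carrier[OF assms(2)]]
  by (simp add: skew_mult_delta[OF assms(1)])

lemma smult_decompose:
  assumes "x \<in> skew_carrier (Sym \<Psi>)"
  shows "smult x w = (\<Sum>g\<in>{g. x g \<noteq> 0}. smult (skew_delta g (x g)) w)"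
proof -
  have "smult x w = (\<Sum>g\<in>F. smult (skew_delta g (x g)) w)"
    if "finite F" "x \<in> skew_carrier (Sym \<Psi>)" "{g. x g \<noteq> 0} = F" for F x
    using that
  proof (induction F arbitrary: x rule: finite_induct)
    case empty
    then have "x = (\<lambda>_. 0)" by auto
    then show ?case using smult_zero by simp
  next
    case (insert g0 F)
    define x' where "x' = x(g0 := 0)"
    have x'_supp: "{g. x' g \<noteq> 0} = F" using insert(2,5) unfolding x'_def by auto
    moreover have "\<forall>g. x' g \<noteq> 0 \<longrightarrow> g \<in> Sym \<Psi>" using insert(4) unfolding x'_def skew_carrier_def by simp
    ultimately have x': "x' \<in> skew_carrier (Sym \<Psi>)" "{g. x' g \<noteq> 0} = F"
      using insert(1) unfolding skew_carrier_def by simp_all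
    have g0: "g0 \<in> Sym \<Psi>" using insert(4,5) unfolding skew_carrier_def by auto
    have "x = skew_add (skew_delta g0 (x g0)) x'"
      unfolding skew_add_def skew_delta_def x'_def by (rule ext) simp
    then have "smult x w = smult (skew_delta g0 (x g0)) w + smult x' w"
      using smult_add[OF skew_delta_carrier[OF g0] x'(1)] by metis
    also have "smult x' w = (\<Sum>g\<in>F. smult (skew_delta g (x' g)) w)" using insert.IH[OF x'] .
    also have "\<dots> = (\<Sum>g\<in>F. smult (skew_delta g (x g)) w)"
      using insert(2) unfolding x'_def by (intro sum.cong) auto
    finally show ?case using insert(1,2) by simp
  qed
  then show ?thesis using assms unfolding skew_carrier_def by blast
qed

lemma mspan_zero: "0 \<in> mspan (skew_carrier G) smult F"
proof -
  have "(\<Sum>f\<in>F. smult (\<lambda>_. 0) f) = 0" by (simp add: smult_zero)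
  moreover have "\<forall>f\<in>F. (\<lambda>_. 0) \<in> skew_carrier G" using zero_skew_carrier by blast
  ultimately show ?thesis unfolding mspan_def by (intro CollectI exI[of _ "\<lambda>_. (\<lambda>_. 0)"]) simp
qed

lemma mspan_add:
  assumes "G \<subseteq> Sym \<Psi>" "a \<in> mspan (skew_carrier G) smult F" "b \<in> mspan (skew_carrier G) smult F"
  shows "a + b \<in> mspan (skew_carrier G) smult F"
proof -
  obtain c c' where c: "a = (\<Sum>f\<in>F. smult (c f) f)" "\<forall>f\<in>F. c f \<in> skew_carrier G"
    and c': "b = (\<Sum>f\<in>F. smult (c' f) f)" "\<forall>f\<in>F. c' f \<in> skew_carrier G"
    using assms(2,3) unfolding mspan_def by blast
  have "a + b = (\<Sum>f\<in>F. smult (skew_add (c f) (c' f)) f)"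
    unfolding c(1) c'(1) sum.distrib[symmetric]
  proof (rule sum.cong)
    fix f assume "f \<in> F"
    then have "c f \<in> skew_carrier (Sym \<Psi>)" "c' f \<in> skew_carrier (Sym \<Psi>)"
      using c(2) c'(2) skew_carrier_mono[OF assms(1)] by blast+
    then show "smult (c f) f + smult (c' f) f = smult (skew_add (c f) (c' f)) f" by (simp add: smult_add)
  qed simp
  moreover have "skew_add (c f) (c' f) \<in> skew_carrier G" if "f \<in> F" for f
    using c(2) c'(2) skew_add_carrier that by blast
  ultimately show ?thesis by (rule mspanI)
qed

lemma mspan_smult:
  assumes "G \<subseteq> Sym \<Psi>" "\<And>g h. g \<in> G \<Longrightarrow> h \<in> G \<Longrightarrow> g \<circ> h \<in> G"
    and x: "x \<in> skew_carrier G" and a: "a \<in> mspan (skew_carrier G) smult F"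
  shows "smult x a \<in> mspan (skew_carrier G) smult F"
proof -
  obtain c where c: "a = (\<Sum>f\<in>F. smult (c f) f)" "\<forall>f\<in>F. c f \<in> skew_carrier G"
    using a unfolding mspan_def by blast
  have carrier: "skew_carrier G \<subseteq> skew_carrier (Sym \<Psi>)" using skew_carrier_mono[OF assms(1)] .
  have "smult x a = (\<Sum>f\<in>F. smult x (smult (c f) f))"
    unfolding c(1) using smult_sum_right x carrier by blast
  also have "\<dots> = (\<Sum>f\<in>F. smult (skew_mult act x (c f)) f)"
  proof (rule sum.cong)
    fix f assume "f \<in> F"
    then have "c f \<in> skew_carrier (Sym \<Psi>)" "x \<in> skew_carrier (Sym \<Psi>)" using c(2) x carrier by blast+
    then show "smult x (smult (c f) f) = smult (skew_mult act x (c f)) f" by (simp add: smult_skew_mult)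
  qed simp
  finally have "smult x a = (\<Sum>f\<in>F. smult (skew_mult act x (c f)) f)" .
  moreover have "skew_mult act x (c f) \<in> skew_carrier G" if "f \<in> F" for f
    using c(2) skew_mult_carrier[OF assms(2) x] that by blast
  ultimately show ?thesis by (rule mspanI)
qed

lemma mspan_submodule:
  assumes "perm_subgroup \<Psi> G"
  shows "submodule (skew_carrier G) smult (mspan (skew_carrier G) smult F)"
proof -
  have "G \<subseteq> Sym \<Psi>" "\<And>g h. g \<in> G \<Longrightarrow> h \<in> G \<Longrightarrow> g \<circ> h \<in> G"
    using assms unfolding perm_subgroup_def by blast+
  then show ?thesis unfolding submodule_def using mspan_zero mspan_add mspan_smult by simp
qed

lemma mspan_insert:
  assumes "finite F" "id \<in> G"
  shows "mspan (skew_carrier G) smult F \<subseteq> mspan (skew_carrier G) smult (insert w F)"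
    and "w \<in> mspan (skew_carrier G) smult (insert w F)"
proof -
  show "mspan (skew_carrier G) smult F \<subseteq> mspan (skew_carrier G) smult (insert w F)"
  proof
    fix a assume "a \<in> mspan (skew_carrier G) smult F"
    then obtain c where c: "a = (\<Sum>f\<in>F. smult (c f) f)" "\<forall>f\<in>F. c f \<in> skew_carrier G"
      unfolding mspan_def by blast
    define c' where "c' f = (if f \<in> F then c f else (\<lambda>_. 0))" for f
    have "a = (\<Sum>f\<in>insert w F. smult (c' f) f)"
      unfolding c(1) c'_def using assms(1) by (cases "w \<in> F") (simp_all add: smult_zero insert_absorb)
    moreover have "c' f \<in> skew_carrier G" for f
      unfolding c'_def using c(2) by (simp add: zero_skew_carrier)
    ultimately show "a \<in> mspan (skew_carrier G) smult (insert w F)" by (rule mspanI)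
  qed
  define c :: "'w \<Rightarrow> ('p \<Rightarrow> 'p) \<Rightarrow> 'a" where "c f = (if f = w then skew_one else (\<lambda>_. 0))" for f
  have "w = (\<Sum>f\<in>insert w F. smult (c f) f)"
    using assms(1) by (simp add: sum.insert_remove c_def smult_zero smult_one)
  moreover have "c f \<in> skew_carrier G" for f
    unfolding c_def skew_one_def by (simp add: skew_delta_carrier[OF assms(2)] zero_skew_carrier)
  ultimately show "w \<in> mspan (skew_carrier G) smult (insert w F)" by (rule mspanI)
qed

end

section \<open>Smooth modules generated by finitely many fixed vectors\<close>

lemma perm_open_pstab:
  assumes "perm_open \<Psi> U" "id \<in> U"
  obtains S where "finite S" "S \<subseteq> \<Psi>" "pstab \<Psi> S \<subseteq> U"
proof -
  obtain S where "finite S" "S \<subseteq> \<Psi>" "(\<lambda>h. id \<circ> h) ` pstab \<Psi> S \<subseteq> U"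
    using assms unfolding perm_open_def by blast
  then show ?thesis using that by simp
qed

text \<open>Since the generators are fixed by the pointwise stabilizer of \<open>pts\<close>, the element \<open>a[g] w\<^sub>c\<close>
  only depends on \<open>a\<close>, \<open>c\<close> and \<open>map g pts\<close>, that is, on a monomial.\<close>

locale fixed_generators = skew_mod \<Psi> act smult
  for \<Psi> :: "'p set" and act :: "('p \<Rightarrow> 'p) \<Rightarrow> 'a::{ring,monoid_mult} \<Rightarrow> 'a"
    and smult :: "(('p \<Rightarrow> 'p) \<Rightarrow> 'a) \<Rightarrow> 'w::ab_group_add \<Rightarrow> 'w" +
  fixes gens :: "'w list" and pts :: "'p list"
  assumes distinct_pts: "distinct pts" and pts_subset: "set pts \<subseteq> \<Psi>"
    and gens_fixed: "\<And>c g. c < length gens \<Longrightarrow> g \<in> pstab \<Psi> (set pts) \<Longrightarrow>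
      smult (skew_delta g 1) (gens ! c) = gens ! c"
    and gens_span: "UNIV = mspan (skew_carrier (Sym \<Psi>)) smult (set gens)"
begin

abbreviation mons :: "(nat \<times> 'p list) set" where
  "mons \<equiv> monomials (length gens) (length pts) \<Psi>"

abbreviation coeffs :: "(nat \<times> 'p list \<Rightarrow> 'a) set" where
  "coeffs \<equiv> coeff_space (length gens) (length pts) \<Psi>"

definition lift_perm :: "'p list \<Rightarrow> 'p \<Rightarrow> 'p" where
  "lift_perm f = (SOME g. g \<in> Sym \<Psi> \<and> map g pts = f)"

definition mon_val :: "nat \<times> 'p list \<Rightarrow> 'a \<Rightarrow> 'w" where
  "mon_val m a = smult (skew_delta (lift_perm (snd m)) a) (gens ! fst m)"

definition eval_coeffs :: "(nat \<times> 'p list \<Rightarrow> 'a) \<Rightarrow> 'w" where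
  "eval_coeffs x = (\<Sum>m\<in>supp x. mon_val m (x m))"

lemma ex_Sym_map_pts:
  assumes "distinct f" "length f = length pts" "set f \<subseteq> \<Psi>"
  shows "\<exists>g\<in>Sym \<Psi>. map g pts = f"
proof -
  define h where "h x = the (map_of (zip pts f) x)" for x
  have h: "h (pts ! i) = f ! i" if "i < length pts" for i
    unfolding h_def using map_of_zip_nth[of pts f i] assms(2) distinct_pts that by simp
  have "inj_on h (set pts)"
  proof (rule inj_onI)
    fix x y assume "x \<in> set pts" "y \<in> set pts" "h x = h y"
    then obtain i j where ij: "i < length pts" "j < length pts" "pts ! i = x" "pts ! j = y"
      by (metis in_set_conv_nth)
    then have "f ! i = f ! j" using h \<open>h x = h y\<close> by metis
    then show "x = y" using assms(1,2) ij nth_eq_iff_index_eq by metis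
  qed
  then obtain p where p: "p permutes (set pts \<union> h ` set pts)" "\<And>x. x \<in> set pts \<Longrightarrow> p x = h x"
    using inj_on_extends_to_permutes[of "set pts" h] by blast
  have "h ` set pts \<subseteq> set f"
  proof
    fix y assume "y \<in> h ` set pts"
    then obtain i where "i < length pts" "y = h (pts ! i)" by (metis imageE in_set_conv_nth)
    then show "y \<in> set f" using h assms(2) by simp
  qed
  then have "p permutes \<Psi>" using p(1) permutes_subset pts_subset assms(3) by (metis le_sup_iff order_trans)
  moreover have "map p pts = f" using p(2) h assms(2) by (intro nth_equalityI) auto
  ultimately show ?thesis unfolding Sym_def by blast
qed

lemma lift_perm:
  assumes "m \<in> mons"
  shows "lift_perm (snd m) \<in> Sym \<Psi>" "map (lift_perm (snd m)) pts = snd m"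
proof -
  have "\<exists>g. g \<in> Sym \<Psi> \<and> map g pts = snd m" using ex_Sym_map_pts monomialsD[OF assms] by blast
  then have "lift_perm (snd m) \<in> Sym \<Psi> \<and> map (lift_perm (snd m)) pts = snd m"
    unfolding lift_perm_def by (rule someI_ex)
  then show "lift_perm (snd m) \<in> Sym \<Psi>" "map (lift_perm (snd m)) pts = snd m" by blast+
qed

lemma smult_delta_gens_eq:
  assumes g1: "g1 \<in> Sym \<Psi>" and g2: "g2 \<in> Sym \<Psi>" and "map g1 pts = map g2 pts" and c: "c < length gens"
  shows "smult (skew_delta g1 a) (gens ! c) = smult (skew_delta g2 a) (gens ! c)"
proof -
  have p1: "g1 permutes \<Psi>" and p2: "g2 permutes \<Psi>" using g1 g2 unfolding Sym_def by blast+
  define k where "k = inv g1 \<circ> g2"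
  have k_Sym: "k \<in> Sym \<Psi>" unfolding k_def Sym_def using permutes_compose[OF p2 permutes_inv[OF p1]] by simp
  have "\<forall>t\<in>set pts. g1 t = g2 t" using assms(3) by (simp add: map_eq_conv)
  then have "\<forall>t\<in>set pts. k t = t" unfolding k_def using permutes_inverses(2)[OF p1] by (metis comp_apply)
  then have k: "k \<in> pstab \<Psi> (set pts)" unfolding pstab_def using k_Sym by blast
  have "g1 \<circ> k = g2" unfolding k_def using permutes_inverses(1)[OF p1] by (simp add: fun_eq_iff)
  have "smult (skew_delta g1 a) (gens ! c) = smult (skew_delta g1 a) (smult (skew_delta k 1) (gens ! c))"
    using gens_fixed[OF c k] by simp
  also have "\<dots> = smult (skew_delta (g1 \<circ> k) (a * act g1 1)) (gens ! c)"
    by (rule smult_delta_delta[OF g1 k_Sym])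
  finally show ?thesis using \<open>g1 \<circ> k = g2\<close> act_one[OF g1] by simp
qed

lemma map_pts_mons:
  assumes "g \<in> Sym \<Psi>" "c < length gens"
  shows "(c, map g pts) \<in> mons"
proof -
  have "inj g" using assms(1) permutes_inj unfolding Sym_def by blast
  moreover have "g p \<in> \<Psi>" if "p \<in> \<Psi>" for p using assms(1) that unfolding Sym_def by (simp add: permutes_in_image)
  ultimately show ?thesis
    using assms(2) distinct_pts pts_subset unfolding monomials_def by (auto simp: distinct_map inj_on_def)
qed

lemma mon_val_map_pts:
  assumes "g \<in> Sym \<Psi>" "c < length gens"
  shows "mon_val (c, map g pts) a = smult (skew_delta g a) (gens ! c)"
  unfolding mon_val_def using lift_perm[OF map_pts_mons[OF assms]]
  by (simp add: smult_delta_gens_eq[OF _ assms(1) _ assms(2)])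

lemma mon_val_zero: "mon_val m 0 = 0"
  unfolding mon_val_def by (simp add: skew_delta_zero smult_zero)

lemma mon_val_add: "m \<in> mons \<Longrightarrow> mon_val m (a + b) = mon_val m a + mon_val m b"
  unfolding mon_val_def using smult_delta_add[OF lift_perm(1)] by blast

lemma eval_coeffs_eq_sum:
  assumes "finite F" "supp x \<subseteq> F"
  shows "eval_coeffs x = (\<Sum>m\<in>F. mon_val m (x m))"
  unfolding eval_coeffs_def using assms
  by (intro sum.mono_neutral_left) (auto simp: supp_def mon_val_zero)

lemma eval_coeffs_zero: "eval_coeffs (\<lambda>m. 0) = 0"
  unfolding eval_coeffs_def supp_def by simp

lemma eval_coeffs_add:
  assumes "x \<in> coeffs" "y \<in> coeffs"
  shows "eval_coeffs (\<lambda>m. x m + y m) = eval_coeffs x + eval_coeffs y"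
proof -
  define F where "F = supp x \<union> supp y"
  have F: "finite F" "F \<subseteq> mons" using assms unfolding F_def coeff_space_def by auto
  have "eval_coeffs (\<lambda>m. x m + y m) = (\<Sum>m\<in>F. mon_val m (x m + y m))"
    by (rule eval_coeffs_eq_sum[OF F(1)]) (auto simp: F_def supp_def)
  also have "\<dots> = (\<Sum>m\<in>F. mon_val m (x m) + mon_val m (y m))"
    using F(2) mon_val_add by (intro sum.cong) auto
  also have "\<dots> = eval_coeffs x + eval_coeffs y"
    using eval_coeffs_eq_sum[OF F(1), of x] eval_coeffs_eq_sum[OF F(1), of y]
    unfolding F_def by (simp add: sum.distrib)
  finally show ?thesis .
qed

lemma eval_coeffs_mult:
  assumes "x \<in> coeffs"
  shows "eval_coeffs (\<lambda>m. a * x m) = smult (skew_delta id a) (eval_coeffs x)"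
proof -
  have F: "finite (supp x)" "supp x \<subseteq> mons" using assms unfolding coeff_space_def by auto
  have "eval_coeffs (\<lambda>m. a * x m) = (\<Sum>m\<in>supp x. mon_val m (a * x m))"
    by (rule eval_coeffs_eq_sum[OF F(1)]) (auto simp: supp_def)
  also have "\<dots> = (\<Sum>m\<in>supp x. smult (skew_delta id a) (mon_val m (x m)))"
    unfolding mon_val_def using F(2) lift_perm(1) smult_delta_delta[OF id_Sym]
    by (intro sum.cong) (auto simp: act_id)
  also have "\<dots> = smult (skew_delta id a) (eval_coeffs x)"
    unfolding eval_coeffs_def by (simp add: smult_sum_right[OF skew_delta_carrier[OF id_Sym]])
  finally show ?thesis .
qed

lemma eval_coeffs_uminus:
  assumes "x \<in> coeffs"
  shows "eval_coeffs (\<lambda>m. - x m) = smult (skew_delta id (- 1)) (eval_coeffs x)"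
  using eval_coeffs_mult[OF assms, of "- 1"] by simp

lemma eval_coeffs_coeff_act:
  assumes g: "g \<in> Sym \<Psi>" and x: "x \<in> coeffs"
  shows "eval_coeffs (coeff_act act g x) = smult (skew_delta g 1) (eval_coeffs x)"
proof -
  have F: "finite (supp x)" "supp x \<subseteq> mons" using x unfolding coeff_space_def by auto
  have "inj g" using g permutes_inj unfolding Sym_def by blast
  have "inj_on (mon_map g) (supp x)"
  proof (rule inj_onI)
    fix m1 m2 assume "mon_map g m1 = mon_map g m2"
    then have "fst m1 = fst m2" "map g (snd m1) = map g (snd m2)" unfolding mon_map_def by simp_all
    then show "m1 = m2" using \<open>inj g\<close> by (simp add: inj_map_eq_map prod_eq_iff)
  qed
  then have "eval_coeffs (coeff_act act g x)
      = (\<Sum>m\<in>supp x. mon_val (mon_map g m) (coeff_act act g x (mon_map g m)))"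
    unfolding eval_coeffs_def supp_coeff_act[OF g] by (simp add: sum.reindex)
  also have "\<dots> = (\<Sum>m\<in>supp x. smult (skew_delta g 1) (mon_val m (x m)))"
  proof (rule sum.cong)
    fix m assume "m \<in> supp x"
    then have m: "m \<in> mons" using F(2) by blast
    have lift: "lift_perm (snd m) \<in> Sym \<Psi>" "map (lift_perm (snd m)) pts = snd m" using lift_perm[OF m] by blast+
    have "map (g \<circ> lift_perm (snd m)) pts = map g (snd m)"
      using lift(2) by (metis map_map)
    then have "mon_map g m = (fst m, map (g \<circ> lift_perm (snd m)) pts)"
      unfolding mon_map_def by simp
    then have "mon_val (mon_map g m) (act g (x m)) = smult (skew_delta (g \<circ> lift_perm (snd m)) (act g (x m))) (gens ! fst m)"
      using mon_val_map_pts[OF comp_Sym[OF g lift(1)] monomialsD(1)[OF m]] by simp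
    also have "\<dots> = smult (skew_delta g 1) (mon_val m (x m))"
      unfolding mon_val_def using smult_delta_delta[OF g lift(1), of 1 "x m"] by simp
    finally show "mon_val (mon_map g m) (coeff_act act g x (mon_map g m)) = smult (skew_delta g 1) (mon_val m (x m))"
      using coeff_act_mon_map[OF g, of act x m] by simp
  qed simp
  also have "\<dots> = smult (skew_delta g 1) (eval_coeffs x)"
    unfolding eval_coeffs_def by (simp add: smult_sum_right[OF skew_delta_carrier[OF g]])
  finally show ?thesis .
qed

lemma eval_coeffs_single:
  assumes "m \<in> mons"
  shows "(\<lambda>m'. if m' = m then a else 0) \<in> coeffs" "eval_coeffs (\<lambda>m'. if m' = m then a else 0) = mon_val m a"
proof -
  have supp: "supp (\<lambda>m'. if m' = m then a else 0) \<subseteq> {m}" unfolding supp_def by auto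
  then show "(\<lambda>m'. if m' = m then a else 0) \<in> coeffs"
    unfolding coeff_space_def using assms finite_subset by blast
  show "eval_coeffs (\<lambda>m'. if m' = m then a else 0) = mon_val m a"
    using eval_coeffs_eq_sum[OF _ supp] by simp
qed

lemma sum_in_eval_coeffs_range:
  assumes "\<And>i. i \<in> I \<Longrightarrow> f i \<in> eval_coeffs ` coeffs"
  shows "(\<Sum>i\<in>I. f i) \<in> eval_coeffs ` coeffs"
proof (cases "finite I")
  case True
  then show ?thesis using assms
  proof (induction I rule: finite_induct)
    case empty
    show ?case by (rule image_eqI[of _ _ "\<lambda>m. 0"]) (simp_all add: eval_coeffs_zero coeff_space_zero)
  next
    case (insert i I)
    have "f i \<in> eval_coeffs ` coeffs" by (rule insert.prems) simp
    then obtain x where x: "x \<in> coeffs" "eval_coeffs x = f i" by (rule imageE) simp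
    have "(\<Sum>i\<in>I. f i) \<in> eval_coeffs ` coeffs" by (rule insert.IH) (rule insert.prems, simp)
    then obtain y where y: "y \<in> coeffs" "eval_coeffs y = (\<Sum>i\<in>I. f i)" by (rule imageE) simp
    from x y have "(\<lambda>m. x m + y m) \<in> coeffs" "eval_coeffs (\<lambda>m. x m + y m) = (\<Sum>i\<in>insert i I. f i)"
      using coeff_space_add eval_coeffs_add insert(1,2) by simp_all
    then show ?case by (metis image_eqI)
  qed
next
  case False
  then show ?thesis by (intro image_eqI[of _ _ "\<lambda>m. 0"]) (simp_all add: eval_coeffs_zero coeff_space_zero)
qed

lemma eval_coeffs_surj: "w \<in> eval_coeffs ` coeffs"
proof -
  obtain cf where w: "w = (\<Sum>f\<in>set gens. smult (cf f) f)" and cf: "\<forall>f\<in>set gens. cf f \<in> skew_carrier (Sym \<Psi>)"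
    using gens_span unfolding mspan_def by blast
  have "smult x (gens ! c) \<in> eval_coeffs ` coeffs" if x: "x \<in> skew_carrier (Sym \<Psi>)" and c: "c < length gens" for x c
    unfolding smult_decompose[OF x]
  proof (rule sum_in_eval_coeffs_range)
    fix g assume "g \<in> {g. x g \<noteq> 0}"
    then have g: "g \<in> Sym \<Psi>" using x unfolding skew_carrier_def by blast
    show "smult (skew_delta g (x g)) (gens ! c) \<in> eval_coeffs ` coeffs"
      using eval_coeffs_single[OF map_pts_mons[OF g c]] mon_val_map_pts[OF g c] by (metis image_eqI)
  qed
  then have "smult (cf f) f \<in> eval_coeffs ` coeffs" if "f \<in> set gens" for f
    using cf that by (metis in_set_conv_nth)
  then show ?thesis unfolding w by (rule sum_in_eval_coeffs_range)
qed

lemma stable_submodule_preimage: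
  assumes W: "submodule (skew_carrier U) smult W" and S: "pstab \<Psi> S \<subseteq> U" and C: "C \<subseteq> \<Psi>"
  shows "stable_submodule act \<Psi> S C (length gens) (length pts)
    {x \<in> coeff_space (length gens) (length pts) C. eval_coeffs x \<in> W}"
proof -
  have in_coeffs: "x \<in> coeffs" if "x \<in> coeff_space (length gens) (length pts) C" for x
    using coeff_space_mono[OF C] that by blast
  have W_closed: "0 \<in> W" "\<And>v w. v \<in> W \<Longrightarrow> w \<in> W \<Longrightarrow> v + w \<in> W"
    "\<And>g a w. g \<in> U \<Longrightarrow> w \<in> W \<Longrightarrow> smult (skew_delta g a) w \<in> W"
    using W skew_delta_carrier unfolding submodule_def by blast+
  have "id \<in> pstab \<Psi> S" unfolding pstab_def using id_Sym by simp
  then have "id \<in> U" using S by blast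
  show ?thesis
    unfolding stable_submodule_def
  proof (intro conjI ballI allI)
    show "(\<lambda>m. 0) \<in> {x \<in> coeff_space (length gens) (length pts) C. eval_coeffs x \<in> W}"
      using W_closed(1) by (simp add: coeff_space_zero eval_coeffs_zero)
  next
    fix x y assume "x \<in> {x \<in> coeff_space (length gens) (length pts) C. eval_coeffs x \<in> W}"
      "y \<in> {x \<in> coeff_space (length gens) (length pts) C. eval_coeffs x \<in> W}"
    then show "(\<lambda>m. x m + y m) \<in> {x \<in> coeff_space (length gens) (length pts) C. eval_coeffs x \<in> W}"
      using in_coeffs W_closed(2) by (simp add: coeff_space_add eval_coeffs_add)
  next
    fix x assume "x \<in> {x \<in> coeff_space (length gens) (length pts) C. eval_coeffs x \<in> W}"
    then show "(\<lambda>m. - x m) \<in> {x \<in> coeff_space (length gens) (length pts) C. eval_coeffs x \<in> W}"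
      using in_coeffs W_closed(3)[OF \<open>id \<in> U\<close>] by (simp add: coeff_space_uminus eval_coeffs_uminus)
  next
    fix a x assume "x \<in> {x \<in> coeff_space (length gens) (length pts) C. eval_coeffs x \<in> W}"
    then show "(\<lambda>m. a * x m) \<in> {x \<in> coeff_space (length gens) (length pts) C. eval_coeffs x \<in> W}"
      using in_coeffs W_closed(3)[OF \<open>id \<in> U\<close>] by (simp add: coeff_space_mult eval_coeffs_mult)
  next
    fix g x assume g: "g \<in> supported_pstab \<Psi> S C"
      and x: "x \<in> {x \<in> coeff_space (length gens) (length pts) C. eval_coeffs x \<in> W}"
    have "g \<in> U" using g supported_pstab_pstab S by blast
    then show "coeff_act act g x \<in> {x \<in> coeff_space (length gens) (length pts) C. eval_coeffs x \<in> W}"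
      using coeff_space_coeff_act[OF supported_pstab_Sym[OF g] _ supported_pstab_closed[OF g]]
        eval_coeffs_coeff_act[OF supported_pstab_Sym[OF g]] in_coeffs W_closed(3) x by simp
  qed (simp add: Collect_mono)
qed

text \<open>A submodule that is not finitely generated yields a strictly ascending chain of finitely
  generated submodules; its preimage under \<open>eval_coeffs\<close>, restricted to the countably many
  points involved, contradicts \<open>no_strict_chain_stable_submodules\<close>.\<close>

theorem noetherian_module_open_subgroup:
  assumes noeth: "left_noetherian TYPE('a)" and U: "open_subgroup \<Psi> U"
  shows "noetherian_module (skew_carrier U) smult"
proof -
  have U_group: "perm_subgroup \<Psi> U" and "id \<in> U" and "perm_open \<Psi> U"
    using U unfolding open_subgroup_def perm_subgroup_def by blast+
  obtain S where S: "finite S" "S \<subseteq> \<Psi>" "pstab \<Psi> S \<subseteq> U"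
    by (rule perm_open_pstab[OF \<open>perm_open \<Psi> U\<close> \<open>id \<in> U\<close>]) (rule that)
  have "\<exists>F. finite F \<and> F \<subseteq> N \<and> N = mspan (skew_carrier U) smult F"
    if N: "submodule (skew_carrier U) smult N" for N
  proof (rule ccontr)
    assume not_fg: "\<nexists>F. finite F \<and> F \<subseteq> N \<and> N = mspan (skew_carrier U) smult F"
    obtain F w where F: "\<And>k. finite (F k)" "\<And>k. w k \<notin> mspan (skew_carrier U) smult (F k)"
      "\<And>k. F (Suc k) = insert (w k) (F k)"
      by (rule not_fin_gen_submodule_chain[OF N not_fg]) (rule that)
    have "\<forall>k. \<exists>x\<in>coeffs. w k = eval_coeffs x" using eval_coeffs_surj unfolding image_iff by blast
    from choice[OF this[unfolded Bex_def]] obtain xs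
      where xs: "\<And>k. xs k \<in> coeffs" "\<And>k. w k = eval_coeffs (xs k)"
      by blast
    obtain C where C: "countable C" "S \<subseteq> C" "C \<subseteq> \<Psi>"
      and xs_C: "\<And>k. xs k \<in> coeff_space (length gens) (length pts) C"
      by (rule countable_coeff_space_seq[OF S(1,2) xs(1)]) (rule that)
    define Ns where "Ns k = {x \<in> coeff_space (length gens) (length pts) C.
      eval_coeffs x \<in> mspan (skew_carrier U) smult (F k)}" for k
    have "stable_submodule act \<Psi> S C (length gens) (length pts) (Ns k)" for k
      unfolding Ns_def by (rule stable_submodule_preimage[OF mspan_submodule[OF U_group] S(3) C(3)])
    moreover have "Ns k \<subseteq> Ns (Suc k)" for k
      unfolding Ns_def using mspan_insert(1)[OF F(1) \<open>id \<in> U\<close>] F(3) by auto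
    moreover have "xs k \<in> Ns (Suc k)" "xs k \<notin> Ns k" for k
      unfolding Ns_def using xs_C xs(2) F(2,3) mspan_insert(2)[OF F(1) \<open>id \<in> U\<close>] by auto
    ultimately show False
      using no_strict_chain_stable_submodules[OF noeth C(1,2) S(1) C(3)] by blast
  qed
  then show ?thesis unfolding noetherian_module_def by blast
qed

end

lemma (in skew_mod) smooth_fin_gen_fixed_generators:
  assumes smooth: "smooth_module \<Psi> smult" and fin_gen: "fin_gen_module (skew_carrier (Sym \<Psi>)) smult"
  obtains gens pts where "fixed_generators \<Psi> act smult gens pts"
proof -
  obtain F where F: "finite F" "UNIV = mspan (skew_carrier (Sym \<Psi>)) smult F"
    using fin_gen unfolding fin_gen_module_def by blast
  have "\<forall>w. \<exists>T. finite T \<and> T \<subseteq> \<Psi> \<and> pstab \<Psi> T \<subseteq> {g \<in> Sym \<Psi>. smult (skew_delta g 1) w = w}"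
  proof
    fix w
    have stab_id: "id \<in> {g \<in> Sym \<Psi>. smult (skew_delta g 1) w = w}"
      using id_Sym smult_one unfolding skew_one_def by simp
    have stab_open: "perm_open \<Psi> {g \<in> Sym \<Psi>. smult (skew_delta g 1) w = w}"
      using smooth unfolding smooth_module_def by blast
    obtain T where "finite T" "T \<subseteq> \<Psi>" "pstab \<Psi> T \<subseteq> {g \<in> Sym \<Psi>. smult (skew_delta g 1) w = w}"
      by (rule perm_open_pstab[OF stab_open stab_id]) (rule that)
    then show "\<exists>T. finite T \<and> T \<subseteq> \<Psi> \<and> pstab \<Psi> T \<subseteq> {g \<in> Sym \<Psi>. smult (skew_delta g 1) w = w}"
      by blast
  qed
  from choice[OF this] obtain T where T: "\<And>w. finite (T w)" "\<And>w. T w \<subseteq> \<Psi>"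
    "\<And>w. pstab \<Psi> (T w) \<subseteq> {g \<in> Sym \<Psi>. smult (skew_delta g 1) w = w}"
    by blast
  obtain gens where gens: "set gens = F" using finite_list[OF F(1)] by blast
  obtain pts where pts: "distinct pts" "set pts = (\<Union>w\<in>F. T w)"
    using finite_distinct_list[of "\<Union>w\<in>F. T w"] F(1) T(1) by blast
  have "set pts \<subseteq> \<Psi>" using pts(2) T(2) by blast
  moreover have "smult (skew_delta g 1) (gens ! c) = gens ! c"
    if "c < length gens" "g \<in> pstab \<Psi> (set pts)" for c g
  proof -
    have "T (gens ! c) \<subseteq> set pts" using that(1) gens pts(2) by auto
    then have "g \<in> pstab \<Psi> (T (gens ! c))" using that(2) unfolding pstab_def by blast
    then show ?thesis using T(3) by blast
  qed
  ultimately have "fixed_generators \<Psi> act smult gens pts"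
    using pts(1) F(2) gens by unfold_locales simp_all
  then show ?thesis using that by blast
qed

theorem corollary4p12:
  fixes \<Psi> :: "'p set"
    and act :: "('p \<Rightarrow> 'p) \<Rightarrow> 'a::{ring,monoid_mult} \<Rightarrow> 'a"
    and smult :: "(('p \<Rightarrow> 'p) \<Rightarrow> 'a) \<Rightarrow> 'w::ab_group_add \<Rightarrow> 'w"
    and U :: "('p \<Rightarrow> 'p) set"
  assumes "left_noetherian TYPE('a)"
    and "ring_aut_action \<Psi> act"
    and "smooth_ring_action \<Psi> act"
    and "skew_module (Sym \<Psi>) act smult"
    and "smooth_module \<Psi> smult"
    and "fin_gen_module (skew_carrier (Sym \<Psi>)) smult"
    and "open_subgroup \<Psi> U"
  shows "noetherian_module (skew_carrier U) smult"
proof -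
  interpret skew_mod \<Psi> act smult
    using assms(2,4) by (intro skew_mod.intro ring_aut.intro skew_mod_axioms.intro)
  obtain gens pts where "fixed_generators \<Psi> act smult gens pts"
    using smooth_fin_gen_fixed_generators[OF assms(5,6)] .
  then show ?thesis using fixed_generators.noetherian_module_open_subgroup assms(1,7) by blast
qed

end
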